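(* Let $k,l,r$ be integers with $k\ge 3$, $l\ge 2$, $r\ge 2$, and let $c>0$ be real. Then there exists $n_0=n_0(c,k,l,r)$ such that every linear $r$-uniform hypergraph $H$ on $n\ge n_0$ vertices with $$\rho(H)\ge \frac{n}{r-1}\left(1-\frac{1}{k-1}+c\right)$$ contains a copy of $K_k(l,\ldots,l)^{r}$.
   Context: An $r$-uniform hypergraph is linear if any two distinct edges share at most one vertex. $\rho(H)$ is the spectral radius of the adjacency tensor $\mathcal{A}(H)$, the order-$r$ dimension-$n$ tensor with entry $\frac{1}{(r-1)!}$ at $(i_1,\dots,i_r)$ if $\{v_{i_1},\dots,v_{i_r}\}\in E(H)$ and $0$ otherwise; eigenvalues $\lambda$ are defined by $\sum_{i_2,\dots,i_r}a_{ii_2\cdots i_r}x_{i_2}\cdots x_{i_r}=\lambda x_i^{r-1}$ for all $i$ with $x\neq 0$, and $\rho$ is the maximum modulus of eigenvalues. $K_k(l,\ldots,l)$ is the complete $k$-partite graph with all $k$ parts of size $l$. For a graph $F$, its $r$-expansion $F^r$ is obtained by adding to each edge $e$ a set $S_e$ of $r-2$ new vertices (pairwise disjoint and disjoint from $V(F)$), with edges $e\cup S_e$. "Contains" means as a not necessarily induced subhypergraph. *)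

theory Defs
  imports Complex_Main
begin

definition uniform_hypergraph :: "nat \<Rightarrow> 'a set \<Rightarrow> 'a set set \<Rightarrow> bool" where
  "uniform_hypergraph r V E \<longleftrightarrow> finite V \<and> (\<forall>e\<in>E. e \<subseteq> V \<and> card e = r)"

definition linear_hypergraph :: "'a set set \<Rightarrow> bool" where
  "linear_hypergraph E \<longleftrightarrow> (\<forall>e\<in>E. \<forall>f\<in>E. e \<noteq> f \<longrightarrow> card (e \<inter> f) \<le> 1)"

text \<open>Entry of the adjacency tensor of an r-uniform hypergraph at index (i, i_2, ..., i_r),
  the tail (i_2,...,i_r) being given as a list.\<close>
definition adj_entry :: "nat \<Rightarrow> 'a set set \<Rightarrow> 'a \<Rightarrow> 'a list \<Rightarrow> real" where
  "adj_entry r E i ys = (if set (i # ys) \<in> E then 1 / fact (r - 1) else 0)"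

definition tensor_eigenvalue :: "nat \<Rightarrow> 'a set \<Rightarrow> 'a set set \<Rightarrow> complex \<Rightarrow> bool" where
  "tensor_eigenvalue r V E lam \<longleftrightarrow>
     (\<exists>x :: 'a \<Rightarrow> complex. (\<exists>v\<in>V. x v \<noteq> 0) \<and>
        (\<forall>i\<in>V. (\<Sum>ys\<in>{ys. set ys \<subseteq> V \<and> length ys = r - 1}.
                   complex_of_real (adj_entry r E i ys) * prod_list (map x ys))
                 = lam * x i ^ (r - 1)))"

definition spectral_radius_hg :: "nat \<Rightarrow> 'a set \<Rightarrow> 'a set set \<Rightarrow> real" where
  "spectral_radius_hg r V E = Sup {cmod lam | lam. tensor_eigenvalue r V E lam}"

text \<open>Complete k-partite graph K_k(l,...,l): vertices (part, index).\<close>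
definition Kkl_verts :: "nat \<Rightarrow> nat \<Rightarrow> (nat \<times> nat) set" where
  "Kkl_verts k l = {0..<k} \<times> {0..<l}"

definition Kkl_edges :: "nat \<Rightarrow> nat \<Rightarrow> (nat \<times> nat) set set" where
  "Kkl_edges k l = {{(i, a), (j, b)} | i a j b. i < k \<and> j < k \<and> a < l \<and> b < l \<and> i \<noteq> j}"

text \<open>r-expansion of a graph (W, F): each edge e gets r-2 new vertices Inr (e, j), j < r-2.\<close>
definition expansion_verts :: "nat \<Rightarrow> 'b set \<Rightarrow> 'b set set \<Rightarrow> ('b + 'b set \<times> nat) set" where
  "expansion_verts r W F = Inl ` W \<union> {Inr (e, j) | e j. e \<in> F \<and> j < r - 2}"

definition expansion_edges :: "nat \<Rightarrow> 'b set set \<Rightarrow> ('b + 'b set \<times> nat) set set" where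
  "expansion_edges r F = {Inl ` e \<union> {Inr (e, j) | j. j < r - 2} | e. e \<in> F}"

definition contains_hg :: "'a set \<Rightarrow> 'a set set \<Rightarrow> 'c set \<Rightarrow> 'c set set \<Rightarrow> bool" where
  "contains_hg V E V' E' \<longleftrightarrow>
     (\<exists>f. inj_on f V' \<and> f ` V' \<subseteq> V \<and> (\<forall>e\<in>E'. f ` e \<in> E))"

end

theory Submission
  imports Defs "HOL-Analysis.Convex"
begin

(* An eigenvector x of the adjacency tensor for lambda gives the weighting w = |x|^(r-1) of the
   shadow graph with (r-1) |lambda| w_i <= sum of w_j over the shadow neighbours j of i: this is
   AM-GM applied to each term of the eigenvalue equation, with linearity bounding by (r-1)! the
   number of tails through a given neighbour. Maximising a penalised quadratic form in w extracts a
   vertex set with a spread probability distribution of weighted minimum degree above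
   1 - 1/(k-1), and a weighted Erdos-Stone theorem (induction on the number of parts, double
   counting and pigeonhole on common neighbourhoods) then gives a complete k-partite subgraph of
   the shadow with huge parts. In it one picks greedily a transversal X that is loose: every edge
   meets X in at most two vertices and edges meeting X in two vertices are disjoint outside X.
   The edges through the pairs of X are then pairwise disjoint outside X and form the expansion. *)

definition shadow_nbrs :: "'a set set \<Rightarrow> 'a \<Rightarrow> 'a set" where
  "shadow_nbrs E i = {j. j \<noteq> i \<and> (\<exists>e\<in>E. i \<in> e \<and> j \<in> e)}"

definition edge_tails :: "'a set set \<Rightarrow> 'a \<Rightarrow> nat \<Rightarrow> 'a list set" where
  "edge_tails E i m = {ys. length ys = m \<and> set (i # ys) \<in> E}"

lemma shadow_nbrs_sym: "a \<in> shadow_nbrs E b \<longleftrightarrow> b \<in> shadow_nbrs E a"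
  unfolding shadow_nbrs_def by blast

lemma shadow_nbrs_irrefl: "a \<notin> shadow_nbrs E a"
  unfolding shadow_nbrs_def by blast

lemma shadow_nbrs_subset:
  "uniform_hypergraph r V E \<Longrightarrow> shadow_nbrs E i \<subseteq> V"
  unfolding shadow_nbrs_def uniform_hypergraph_def by blast

lemma linear_hypergraph_edge_eq:
  assumes "linear_hypergraph E" "e \<in> E" "e' \<in> E" "finite e"
    and "a \<in> e" "b \<in> e" "a \<in> e'" "b \<in> e'" "a \<noteq> b"
  shows "e = e'"
proof (rule ccontr)
  assume "e \<noteq> e'"
  then have "card (e \<inter> e') \<le> 1"
    using assms(1-3) unfolding linear_hypergraph_def by blast
  moreover have "card {a, b} \<le> card (e \<inter> e')"
    using assms(4-8) by (intro card_mono) auto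
  ultimately show False using \<open>a \<noteq> b\<close> by simp
qed

lemma edge_tails_distinct:
  assumes "uniform_hypergraph (Suc m) V E" "ys \<in> edge_tails E i m"
  shows "distinct (i # ys)"
  using assms unfolding uniform_hypergraph_def edge_tails_def
  by (intro card_distinct) auto

lemma finite_edge_tails:
  assumes "uniform_hypergraph r V E"
  shows "finite (edge_tails E i m)"
proof (rule finite_subset)
  show "edge_tails E i m \<subseteq> {ys. set ys \<subseteq> V \<and> length ys = m}"
    using assms unfolding uniform_hypergraph_def edge_tails_def by auto
  show "finite {ys. set ys \<subseteq> V \<and> length ys = m}"
    using assms unfolding uniform_hypergraph_def by (simp add: finite_lists_length_eq)
qed

text \<open>Linearity is used here: all tails through j lie in the unique edge containing i and j, and
  they are orderings of the m other vertices of that edge.\<close>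
lemma card_edge_tails_containing_le:
  assumes U: "uniform_hypergraph (Suc m) V E" and Lin: "linear_hypergraph E"
  shows "card {ys \<in> edge_tails E i m. j \<in> set ys} \<le> fact m"
proof (cases "{ys \<in> edge_tails E i m. j \<in> set ys} = {}")
  case False
  then obtain ys0 where ys0: "ys0 \<in> edge_tails E i m" "j \<in> set ys0" by blast
  define e0 where "e0 = set (i # ys0)"
  have e0E: "e0 \<in> E" using ys0 unfolding edge_tails_def e0_def by simp
  have dist0: "distinct (i # ys0)" by (rule edge_tails_distinct[OF U ys0(1)])
  have ce: "card (e0 - {i}) = m"
    using dist0 ys0(1) unfolding e0_def edge_tails_def by (simp add: distinct_card)
  have fin0: "finite (e0 - {i})" unfolding e0_def by simp
  have sub: "{ys \<in> edge_tails E i m. j \<in> set ys}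
      \<subseteq> {xs. length xs = m \<and> distinct xs \<and> set xs \<subseteq> e0 - {i}}"
  proof
    fix ys assume ys: "ys \<in> {ys \<in> edge_tails E i m. j \<in> set ys}"
    then have "set (i # ys) \<in> E" "distinct (i # ys)"
      using edge_tails_distinct[OF U] unfolding edge_tails_def by auto
    moreover have "set (i # ys) = e0"
      using linear_hypergraph_edge_eq[OF Lin \<open>set (i # ys) \<in> E\<close> e0E] ys ys0 dist0
      unfolding e0_def by auto
    ultimately show "ys \<in> {xs. length xs = m \<and> distinct xs \<and> set xs \<subseteq> e0 - {i}}"
      using ys unfolding edge_tails_def by auto
  qed
  have "card {xs. length xs = m \<and> distinct xs \<and> set xs \<subseteq> e0 - {i}} = fact m"
    using card_lists_distinct_length_eq[OF fin0, of m] ce by (simp add: fact_prod)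
  moreover have "finite {xs. length xs = m \<and> distinct xs \<and> set xs \<subseteq> e0 - {i}}"
    using finite_lists_length_eq[OF fin0, of m] by (rule finite_subset[rotated]) auto
  ultimately show ?thesis using card_mono[OF _ sub] by simp
next
  case True
  show ?thesis unfolding True by simp
qed

lemma sum_edge_tails_le_shadow:
  fixes w :: "'a \<Rightarrow> real"
  assumes U: "uniform_hypergraph (Suc m) V E" and Lin: "linear_hypergraph E"
    and w: "\<And>j. 0 \<le> w j"
  shows "(\<Sum>ys\<in>edge_tails E i m. sum w (set ys)) \<le> fact m * sum w (shadow_nbrs E i)"
proof -
  define T where "T = edge_tails E i m"
  define Sh where "Sh = shadow_nbrs E i"
  have finT: "finite T" unfolding T_def by (rule finite_edge_tails[OF U])
  have finSh: "finite Sh"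
    using shadow_nbrs_subset[OF U] U unfolding Sh_def uniform_hypergraph_def
    by (meson finite_subset)
  have "set ys \<subseteq> Sh" if "ys \<in> T" for ys
    using edge_tails_distinct[OF U that[unfolded T_def]] that
    unfolding T_def Sh_def edge_tails_def shadow_nbrs_def by auto
  then have "{j\<in>Sh. j \<in> set ys} = set ys" if "ys \<in> T" for ys
    using that by blast
  then have "(\<Sum>ys\<in>T. sum w (set ys)) = (\<Sum>ys\<in>T. \<Sum>j\<in>{j\<in>Sh. j \<in> set ys}. w j)"
    by simp
  also have "\<dots> = (\<Sum>j\<in>Sh. \<Sum>ys\<in>{ys\<in>T. j \<in> set ys}. w j)"
    by (rule sum.swap_restrict[OF finT finSh])
  also have "\<dots> = (\<Sum>j\<in>Sh. w j * card {ys\<in>T. j \<in> set ys})"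
    by (simp add: mult.commute)
  also have "\<dots> \<le> (\<Sum>j\<in>Sh. w j * fact m)"
  proof (intro sum_mono mult_left_mono)
    show "real (card {ys\<in>T. j \<in> set ys}) \<le> fact m" for j
      using card_edge_tails_containing_le[OF U Lin, of i j] unfolding T_def
      by (metis of_nat_fact of_nat_le_iff)
  qed (use w in auto)
  finally show ?thesis
    unfolding T_def Sh_def by (simp add: sum_distrib_left mult.commute)
qed

lemma norm_prod_list_map:
  fixes x :: "'a \<Rightarrow> 'b::real_normed_div_algebra"
  shows "norm (prod_list (map x ys)) = prod_list (map (\<lambda>i. norm (x i)) ys)"
  by (induction ys) (auto simp: norm_mult)

lemma prod_le_mean_of_powers:
  fixes y :: "'a \<Rightarrow> real"
  assumes "finite S" "S \<noteq> {}" "\<And>i. i \<in> S \<Longrightarrow> 0 \<le> y i"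
  shows "prod y S \<le> (\<Sum>i\<in>S. y i ^ card S) / card S"
proof -
  define n where "n = card S"
  have n: "n > 0" using assms unfolding n_def by (simp add: card_gt_0_iff)
  have "((prod y S) ^ n) powr (1 / n) \<le> (\<Sum>i\<in>S. y i ^ n / n)"
    using arith_geom_mean[of S "\<lambda>i. y i ^ n"] assms
    by (simp add: n_def prod_power_distrib)
  moreover have "((prod y S) ^ n) powr (1 / n) = prod y S"
  proof -
    have "prod y S \<ge> 0" using assms(3) by (simp add: prod_nonneg)
    then show ?thesis
      using n by (simp add: real_root_power_cancel flip: root_powr_inverse)
  qed
  ultimately show ?thesis unfolding n_def by (simp add: sum_divide_distrib)
qed

lemma edge_tails_eq:
  assumes "uniform_hypergraph r V E"
  shows "{ys. set ys \<subseteq> V \<and> length ys = m \<and> set (i # ys) \<in> E} = edge_tails E i m"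
  using assms unfolding uniform_hypergraph_def edge_tails_def by auto

lemma norm_tensor_row_le:
  fixes x :: "'a \<Rightarrow> complex"
  assumes U: "uniform_hypergraph r V E"
  shows "cmod (\<Sum>ys\<in>{ys. set ys \<subseteq> V \<and> length ys = r - 1}.
            complex_of_real (adj_entry r E i ys) * prod_list (map x ys))
    \<le> (\<Sum>ys\<in>edge_tails E i (r - 1). prod_list (map (\<lambda>j. cmod (x j)) ys)) / fact (r - 1)"
proof -
  define Y where "Y = {ys. set ys \<subseteq> V \<and> length ys = r - 1}"
  have finY: "finite Y"
    using U unfolding Y_def uniform_hypergraph_def by (simp add: finite_lists_length_eq)
  have "cmod (\<Sum>ys\<in>Y. complex_of_real (adj_entry r E i ys) * prod_list (map x ys))
      \<le> (\<Sum>ys\<in>Y. cmod (complex_of_real (adj_entry r E i ys) * prod_list (map x ys)))"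
    by (rule norm_sum)
  also have "\<dots> = (\<Sum>ys\<in>Y. if set (i # ys) \<in> E
                     then prod_list (map (\<lambda>j. cmod (x j)) ys) / fact (r - 1) else 0)"
    by (intro sum.cong refl) (simp add: adj_entry_def norm_mult norm_prod_list_map)
  also have "\<dots> = (\<Sum>ys\<in>{ys\<in>Y. set (i # ys) \<in> E}. prod_list (map (\<lambda>j. cmod (x j)) ys) / fact (r - 1))"
    by (rule sum.inter_filter[OF finY, symmetric])
  also have "{ys\<in>Y. set (i # ys) \<in> E} = edge_tails E i (r - 1)"
    using edge_tails_eq[OF U] unfolding Y_def by simp
  finally show ?thesis unfolding Y_def by (simp add: sum_divide_distrib)
qed

lemma tensor_eigenvalue_shadow_weighting:
  assumes U: "uniform_hypergraph r V E" and Lin: "linear_hypergraph E" and r: "r \<ge> 2"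
    and ev: "tensor_eigenvalue r V E lam"
  obtains w :: "'a \<Rightarrow> real"
  where "\<And>i. 0 \<le> w i" "\<exists>i\<in>V. 0 < w i"
    "\<And>i. i \<in> V \<Longrightarrow> real (r - 1) * cmod lam * w i \<le> sum w (shadow_nbrs E i)"
proof -
  define m where "m = r - 1"
  have m: "m > 0" "r = Suc m" using r unfolding m_def by auto
  obtain x :: "'a \<Rightarrow> complex" where x0: "\<exists>v\<in>V. x v \<noteq> 0"
    and eig: "\<And>i. i \<in> V \<Longrightarrow> (\<Sum>ys\<in>{ys. set ys \<subseteq> V \<and> length ys = r - 1}.
                   complex_of_real (adj_entry r E i ys) * prod_list (map x ys)) = lam * x i ^ (r - 1)"
    using ev unfolding tensor_eigenvalue_def by blast
  define y where "y i = cmod (x i)" for i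
  define w where "w i = y i ^ m" for i
  have y: "0 \<le> y i" for i unfolding y_def by simp
  have w: "0 \<le> w i" for i unfolding w_def using y by simp
  have key: "m * cmod lam * w i \<le> sum w (shadow_nbrs E i)" if "i \<in> V" for i
  proof -
    have "cmod lam * w i \<le> (\<Sum>ys\<in>edge_tails E i m. prod_list (map y ys)) / fact m"
      using norm_tensor_row_le[OF U, of i x] eig[OF that]
      unfolding w_def y_def m_def by (simp add: norm_mult norm_power)
    also have "\<dots> \<le> (\<Sum>ys\<in>edge_tails E i m. sum w (set ys) / m) / fact m"
    proof (intro divide_right_mono sum_mono)
      fix ys assume ys: "ys \<in> edge_tails E i m"
      then have "distinct ys" "length ys = m"
        using edge_tails_distinct[OF U[unfolded m(2)] ys] unfolding edge_tails_def by auto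
      moreover have "ys \<noteq> []" using \<open>length ys = m\<close> m(1) by auto
      ultimately show "prod_list (map y ys) \<le> sum w (set ys) / m"
        using prod_le_mean_of_powers[of "set ys" y] y
        by (simp add: w_def distinct_card prod.distinct_set_conv_list)
    qed simp
    also have "\<dots> \<le> fact m * sum w (shadow_nbrs E i) / (m * fact m)"
      using sum_edge_tails_le_shadow[OF U[unfolded m(2)] Lin w, where i = i]
      by (simp add: divide_right_mono flip: sum_divide_distrib divide_divide_eq_left)
    finally show ?thesis using m by (simp add: field_simps)
  qed
  obtain v where "v \<in> V" "x v \<noteq> 0" using x0 by blast
  then have "0 < w v" unfolding w_def y_def by simp
  show ?thesis
  proof (rule that[of w])
    show "\<exists>i\<in>V. 0 < w i" using \<open>v \<in> V\<close> \<open>0 < w v\<close> by blast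
  qed (use w key in \<open>auto simp: m_def\<close>)
qed

definition graph_on :: "'a set \<Rightarrow> ('a \<Rightarrow> 'a set) \<Rightarrow> bool" where
  "graph_on S N \<longleftrightarrow> finite S \<and> (\<forall>v\<in>S. N v \<subseteq> S \<and> v \<notin> N v) \<and> (\<forall>u\<in>S. \<forall>v\<in>S. v \<in> N u \<longrightarrow> u \<in> N v)"

definition quad_form :: "('a \<Rightarrow> 'a set) \<Rightarrow> ('a \<Rightarrow> real) \<Rightarrow> 'a set \<Rightarrow> real" where
  "quad_form N p S = (\<Sum>a\<in>S. p a * sum p (N a \<inter> S))"

lemma graph_on_restrict:
  "graph_on V N \<Longrightarrow> S \<subseteq> V \<Longrightarrow> graph_on S (\<lambda>v. N v \<inter> S)"
  unfolding graph_on_def by (blast intro: finite_subset)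

lemma graph_on_shadow_nbrs:
  "uniform_hypergraph r V E \<Longrightarrow> graph_on V (shadow_nbrs E)"
  using shadow_nbrs_subset shadow_nbrs_sym shadow_nbrs_irrefl
  unfolding graph_on_def uniform_hypergraph_def by metis

lemma quad_form_remove:
  assumes G: "graph_on V N" and S: "S \<subseteq> V" "v \<in> S"
  shows "quad_form N p S = quad_form N p (S - {v}) + 2 * p v * sum p (N v \<inter> S)"
proof -
  have fin: "finite S" using G S unfolding graph_on_def by (auto intro: finite_subset)
  have nbrs: "{a \<in> S - {v}. v \<in> N a} = N v \<inter> S"
    using G S unfolding graph_on_def by blast
  have split: "p a * sum p (N a \<inter> S)
      = p a * sum p (N a \<inter> (S - {v})) + (if v \<in> N a then p a * p v else 0)" for a
  proof -
    have "N a \<inter> S = (if v \<in> N a then insert v (N a \<inter> (S - {v})) else N a \<inter> (S - {v}))"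
      using S by auto
    then show ?thesis using fin by (simp add: distrib_left)
  qed
  have "quad_form N p S = p v * sum p (N v \<inter> S) + (\<Sum>a\<in>S - {v}. p a * sum p (N a \<inter> S))"
    unfolding quad_form_def using fin S by (simp add: sum.remove)
  also have "(\<Sum>a\<in>S - {v}. p a * sum p (N a \<inter> S))
      = quad_form N p (S - {v}) + (\<Sum>a\<in>S - {v}. if v \<in> N a then p a * p v else 0)"
    unfolding quad_form_def split by (rule sum.distrib)
  also have "(\<Sum>a\<in>S - {v}. if v \<in> N a then p a * p v else 0) = (\<Sum>a\<in>N v \<inter> S. p a * p v)"
    using fin by (simp only: sum.inter_filter[symmetric] finite_Diff nbrs)
  also have "\<dots> = p v * sum p (N v \<inter> S)"
    by (metis sum_distrib_right mult.commute)
  finally show ?thesis by simp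
qed

lemma quad_form_le_square:
  assumes "finite S" "\<And>a. a \<in> S \<Longrightarrow> 0 \<le> p a"
  shows "quad_form N p S \<le> (sum p S)\<^sup>2"
proof -
  have "quad_form N p S \<le> (\<Sum>a\<in>S. p a * sum p S)"
    unfolding quad_form_def
  proof (rule sum_mono, rule mult_left_mono)
    show "sum p (N a \<inter> S) \<le> sum p S" for a
      by (rule sum_mono2) (use assms in auto)
  qed (use assms in auto)
  then show ?thesis by (simp add: power2_eq_square sum_distrib_right)
qed

lemma quad_form_ge_of_eigen:
  assumes G: "graph_on V N" and p: "\<And>i. 0 \<le> p i" "sum p V = 1" and mu: "0 \<le> \<mu>"
    and eig: "\<And>i. i \<in> V \<Longrightarrow> \<mu> * p i \<le> sum p (N i)"
  shows "\<mu> / card V \<le> quad_form N p V"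
proof -
  have "V \<noteq> {}" using p(2) by auto
  moreover have "finite V" using G unfolding graph_on_def by simp
  ultimately have n: "0 < real (card V)" by (simp add: card_gt_0_iff)
  have "1 \<le> (\<Sum>a\<in>V. (p a)\<^sup>2) * card V"
    using sum_squared_le_sum_of_squares[of p V] p(2) by simp
  then have "\<mu> / card V \<le> \<mu> * (\<Sum>a\<in>V. (p a)\<^sup>2)"
    using n mu by (simp add: field_simps mult_left_mono[of 1 _ \<mu>, simplified])
  also have "\<dots> = (\<Sum>a\<in>V. p a * (\<mu> * p a))"
    by (simp add: sum_distrib_left power2_eq_square algebra_simps)
  also have "\<dots> \<le> (\<Sum>a\<in>V. p a * sum p (N a))"
    using eig p by (intro sum_mono mult_left_mono) auto
  also have "\<dots> = quad_form N p V"
    using G unfolding quad_form_def graph_on_def by (intro sum.cong refl) (simp add: Int_absorb2)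
  finally show ?thesis .
qed

lemma quad_form_support:
  assumes "finite V" "U \<subseteq> V" "\<And>v. v \<in> V - U \<Longrightarrow> p v = 0"
  shows "quad_form N p U = quad_form N p V"
proof -
  have "sum p (N a \<inter> U) = sum p (N a \<inter> V)" for a
    using assms by (intro sum.mono_neutral_left) auto
  then have "quad_form N p U = (\<Sum>a\<in>U. p a * sum p (N a \<inter> V))"
    unfolding quad_form_def by simp
  also have "\<dots> = quad_form N p V"
    unfolding quad_form_def using assms by (intro sum.mono_neutral_left) auto
  finally show ?thesis .
qed

lemma penalized_maximizer_degree:
  assumes G: "graph_on V N" and S: "S \<subseteq> V" "v \<in> S" and p: "0 < p v" and \<gamma>: "0 \<le> \<gamma>"
    and opt: "quad_form N p (S - {v}) - \<gamma> * (sum p (S - {v}))\<^sup>2 \<le> quad_form N p S - \<gamma> * (sum p S)\<^sup>2"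
  shows "\<gamma> * (sum p S - p v) \<le> sum p (N v \<inter> S)"
proof -
  have fin: "finite S" using G S unfolding graph_on_def by (auto intro: finite_subset)
  define s where "s = sum p (S - {v})"
  have sum_S: "sum p S = s + p v" unfolding s_def using fin S by (simp add: sum.remove)
  have "\<gamma> * (2 * s * p v + (p v)\<^sup>2) \<le> 2 * p v * sum p (N v \<inter> S)"
    using opt quad_form_remove[OF G S, of p] unfolding sum_S s_def[symmetric]
    by (simp add: power2_eq_square algebra_simps)
  moreover have "0 \<le> \<gamma> * (p v)\<^sup>2" using \<gamma> by simp
  ultimately have "p v * (\<gamma> * s) \<le> p v * sum p (N v \<inter> S)"
    by (simp add: algebra_simps)
  then show ?thesis using p unfolding sum_S by simp
qed

lemma eigen_weight_normalize:
  fixes w :: "'a \<Rightarrow> real"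
  assumes V: "finite V" and w: "\<And>i. 0 \<le> w i" "\<exists>i\<in>V. 0 < w i"
    and eig: "\<And>i. i \<in> V \<Longrightarrow> \<mu> * w i \<le> sum w (N i)"
  obtains p where "\<And>i. 0 \<le> p i" "sum p V = 1" "\<And>i. i \<in> V \<Longrightarrow> \<mu> * p i \<le> sum p (N i)"
proof -
  define W where "W = sum w V"
  have W: "0 < W" unfolding W_def using V w by (metis sum_pos2)
  show ?thesis
  proof (rule that[of "\<lambda>i. w i / W"])
    show "sum (\<lambda>i. w i / W) V = 1" using W unfolding W_def by (simp flip: sum_divide_distrib)
    show "\<mu> * (w i / W) \<le> sum (\<lambda>i. w i / W) (N i)" if "i \<in> V" for i
      using divide_right_mono[OF eig[OF that] less_imp_le[OF W]]
      by (simp flip: sum_divide_distrib)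
  qed (use w W in simp)
qed

text \<open>S maximises the penalised weight \<open>quad_form N p T - \<gamma> * (sum p T)\<^sup>2\<close>;
  optimality against deleting a single vertex is what gives every vertex large weighted degree.\<close>
lemma exists_heavy_dense_subset:
  assumes G: "graph_on V N" and p: "\<And>i. 0 \<le> p i" "sum p V = 1" and mu: "0 \<le> \<mu>"
    and eig: "\<And>i. i \<in> V \<Longrightarrow> \<mu> * p i \<le> sum p (N i)"
    and \<gamma>: "0 \<le> \<gamma>" and dense: "\<gamma> + \<delta> \<le> \<mu> / card V"
  obtains S where "S \<subseteq> V" "\<delta> \<le> (sum p S)\<^sup>2"
    "\<And>v. v \<in> S \<Longrightarrow> \<gamma> * (sum p S - p v) \<le> sum p (N v \<inter> S)"
proof -
  have finV: "finite V" using G unfolding graph_on_def by simp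
  define \<Phi> where "\<Phi> T = quad_form N p T - \<gamma> * (sum p T)\<^sup>2" for T
  define U where "U = {v\<in>V. 0 < p v}"
  have UV: "U \<subseteq> V" and finU: "finite U" using finV unfolding U_def by auto
  have p0: "p v = 0" if "v \<in> V - U" for v using that p(1)[of v] unfolding U_def by auto
  have "sum p U = 1" using p(2) sum.mono_neutral_left[OF finV UV] p0 by metis
  then have "\<delta> \<le> \<Phi> U"
    unfolding \<Phi>_def using quad_form_support[OF finV UV p0] quad_form_ge_of_eigen[OF G p mu eig] dense
    by simp
  have "Max (\<Phi> ` Pow U) \<in> \<Phi> ` Pow U" using finU by (intro Max_in) auto
  then obtain S where S: "Max (\<Phi> ` Pow U) = \<Phi> S" "S \<in> Pow U" by (rule imageE)
  have Smax: "\<Phi> T \<le> \<Phi> S" if "T \<subseteq> U" for T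
    unfolding S(1)[symmetric] using finU that by (intro Max_ge) auto
  have SU: "S \<subseteq> U" using S(2) by simp
  show ?thesis
  proof (rule that)
    show "S \<subseteq> V" using SU UV by blast
    have "\<delta> \<le> \<Phi> S" using Smax[of U] \<open>\<delta> \<le> \<Phi> U\<close> by simp
    moreover have "quad_form N p S \<le> (sum p S)\<^sup>2"
      using quad_form_le_square[OF finite_subset[OF SU finU]] p(1) by blast
    moreover have "0 \<le> \<gamma> * (sum p S)\<^sup>2" using \<gamma> by simp
    ultimately show "\<delta> \<le> (sum p S)\<^sup>2" unfolding \<Phi>_def by linarith
    show "\<gamma> * (sum p S - p v) \<le> sum p (N v \<inter> S)" if "v \<in> S" for v
      by (rule penalized_maximizer_degree[OF G _ that _ \<gamma>])
        (use SU UV that Smax[of "S - {v}"] in \<open>auto simp: \<Phi>_def U_def\<close>)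
  qed
qed

lemma exists_spread_dense_subgraph:
  assumes G: "graph_on V N" and p: "\<And>i. 0 \<le> p i" "sum p V = 1" and mu: "0 < \<mu>"
    and eig: "\<And>i. i \<in> V \<Longrightarrow> \<mu> * p i \<le> sum p (N i)"
    and \<gamma>: "0 \<le> \<gamma>" and \<delta>: "0 < \<delta>" and dense: "\<gamma> + \<delta> \<le> \<mu> / card V"
  obtains S q where "S \<subseteq> V" "sum q S = 1" "\<And>v. v \<in> S \<Longrightarrow> 0 \<le> q v \<and> q v \<le> 1 / (\<mu> * sqrt \<delta>)"
    "\<And>v. v \<in> S \<Longrightarrow> \<gamma> - \<gamma> * q v \<le> sum q (N v \<inter> S)"
proof -
  obtain S where S: "S \<subseteq> V" "\<delta> \<le> (sum p S)\<^sup>2"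
    and deg: "\<And>v. v \<in> S \<Longrightarrow> \<gamma> * (sum p S - p v) \<le> sum p (N v \<inter> S)"
    using exists_heavy_dense_subset[OF G p less_imp_le[OF mu] eig \<gamma> dense] by blast
  define P where "P = sum p S"
  have "0 \<le> P" unfolding P_def using p(1) by (simp add: sum_nonneg)
  then have "sqrt \<delta> \<le> P" using S(2) real_sqrt_le_mono[of \<delta> "P\<^sup>2"] unfolding P_def by simp
  then have P: "sqrt \<delta> \<le> P" "0 < P" using \<delta> by (auto intro: less_le_trans[OF real_sqrt_gt_zero])
  define q where "q v = p v / P" for v
  show ?thesis
  proof (rule that[of S q])
    show "S \<subseteq> V" by (fact S(1))
    show "sum q S = 1" unfolding q_def P_def using P by (simp flip: sum_divide_distrib add: P_def)
  next
    fix v assume v: "v \<in> S"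
    then have "v \<in> V" using S(1) by blast
    have "\<mu> * p v \<le> sum p V"
      using eig[OF \<open>v \<in> V\<close>] sum_mono2[of V "N v" p] G \<open>v \<in> V\<close> p(1)
      unfolding graph_on_def by fastforce
    then have "p v \<le> 1 / \<mu>" using mu p(2) by (simp add: field_simps)
    have "q v \<le> p v / sqrt \<delta>" unfolding q_def using P \<delta> p(1)[of v] by (intro divide_left_mono) auto
    also have "\<dots> \<le> 1 / \<mu> / sqrt \<delta>" using \<open>p v \<le> 1 / \<mu>\<close> \<delta> by (intro divide_right_mono) auto
    finally show "0 \<le> q v \<and> q v \<le> 1 / (\<mu> * sqrt \<delta>)"
      unfolding q_def using P p(1)[of v] by simp
  next
    fix v assume v: "v \<in> S"
    have "\<gamma> - \<gamma> * q v = \<gamma> * (P - p v) / P" unfolding q_def using P by (simp add: field_simps)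
    also have "\<dots> \<le> sum p (N v \<inter> S) / P" using deg[OF v] P unfolding P_def by (intro divide_right_mono) auto
    also have "\<dots> = sum q (N v \<inter> S)" unfolding q_def by (simp add: sum_divide_distrib)
    finally show "\<gamma> - \<gamma> * q v \<le> sum q (N v \<inter> S)" .
  qed
qed

definition multipartite_parts :: "'a set \<Rightarrow> ('a \<Rightarrow> 'a set) \<Rightarrow> nat \<Rightarrow> nat \<Rightarrow> (nat \<Rightarrow> 'a set) \<Rightarrow> bool" where
  "multipartite_parts S N m L P \<longleftrightarrow>
     (\<forall>i<m. P i \<subseteq> S \<and> L \<le> card (P i)) \<and>
     (\<forall>i<m. \<forall>j<m. i \<noteq> j \<longrightarrow> P i \<inter> P j = {} \<and> (\<forall>u\<in>P i. \<forall>v\<in>P j. v \<in> N u))"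

definition spread_distribution :: "'a set \<Rightarrow> ('a \<Rightarrow> real) \<Rightarrow> real \<Rightarrow> bool" where
  "spread_distribution S q \<eta> \<longleftrightarrow> (\<forall>v\<in>S. 0 \<le> q v \<and> q v \<le> \<eta>) \<and> sum q S = 1"

lemma multipartite_partsD:
  assumes "multipartite_parts S N m L P" "i < m"
  shows "P i \<subseteq> S" "L \<le> card (P i)"
    and "j < m \<Longrightarrow> i \<noteq> j \<Longrightarrow> P i \<inter> P j = {}"
    and "j < m \<Longrightarrow> i \<noteq> j \<Longrightarrow> u \<in> P i \<Longrightarrow> v \<in> P j \<Longrightarrow> v \<in> N u"
  using assms unfolding multipartite_parts_def by blast+

lemma spread_distribution_card:
  assumes "spread_distribution S q \<eta>"
  shows "1 \<le> real (card S) * \<eta>"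
proof -
  have "1 = sum q S" using assms unfolding spread_distribution_def by simp
  also have "\<dots> \<le> (\<Sum>v\<in>S. \<eta>)" using assms unfolding spread_distribution_def by (intro sum_mono) auto
  finally show ?thesis by simp
qed

lemma spread_distribution_mono:
  "spread_distribution S q \<eta> \<Longrightarrow> \<eta> \<le> \<eta>' \<Longrightarrow> spread_distribution S q \<eta>'"
  unfolding spread_distribution_def by force

lemma multipartite_parts_exact:
  assumes P: "multipartite_parts S N m T P"
  obtains Q where "multipartite_parts S N m T Q" "\<And>i. i < m \<Longrightarrow> card (Q i) = T"
proof -
  have "\<exists>X. X \<subseteq> P i \<and> card X = T" if "i < m" for i
    using P that unfolding multipartite_parts_def by (meson obtain_subset_with_card_n)
  then obtain Q where Q: "\<And>i. i < m \<Longrightarrow> Q i \<subseteq> P i \<and> card (Q i) = T" by metis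
  have "multipartite_parts S N m T Q"
    unfolding multipartite_parts_def
  proof (intro conjI allI impI)
    fix i assume i: "i < m"
    show "Q i \<subseteq> S" using Q[OF i] multipartite_partsD(1)[OF P i] by blast
    show "T \<le> card (Q i)" using Q[OF i] by simp
    fix j assume "j < m" "i \<noteq> j"
    then show "Q i \<inter> Q j = {}" "\<forall>u\<in>Q i. \<forall>v\<in>Q j. v \<in> N u"
      using Q[OF i] Q[of j] multipartite_partsD(3,4)[OF P i] by blast+
  qed
  then show ?thesis using that Q by blast
qed

lemma card_Int_parts:
  assumes P: "multipartite_parts S N m T P" and S: "finite S"
  shows "card (A \<inter> (\<Union>i<m. P i)) = (\<Sum>i<m. card (A \<inter> P i))"
proof -
  have "finite (A \<inter> P i)" if "i < m" for i
    using finite_subset[OF multipartite_partsD(1)[OF P that] S] by simp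
  moreover have "(A \<inter> P i) \<inter> (A \<inter> P j) = {}" if "i < m" "j < m" "i \<noteq> j" for i j
    using multipartite_partsD(3)[OF P that(1,2,3)] by blast
  ultimately have "card (\<Union>i<m. A \<inter> P i) = (\<Sum>i<m. card (A \<inter> P i))"
    by (intro card_UN_disjoint) auto
  then show ?thesis unfolding Int_UN_distrib .
qed

lemma card_Union_parts:
  assumes "multipartite_parts S N m T P" "\<And>i. i < m \<Longrightarrow> card (P i) = T" "finite S"
  shows "card (\<Union>i<m. P i) = m * T"
proof -
  have "card (\<Union>i<m. P i) = (\<Sum>i<m. card ((\<Union>i<m. P i) \<inter> P i))"
    using card_Int_parts[OF assms(1,3), of "\<Union>i<m. P i"] by (simp only: Int_absorb)
  also have "\<dots> = (\<Sum>i<m. T)"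
  proof (rule sum.cong[OF refl])
    fix i assume "i \<in> {..<m}"
    then have "(\<Union>i<m. P i) \<inter> P i = P i" by blast
    then show "card ((\<Union>i<m. P i) \<inter> P i) = T" using assms(2) \<open>i \<in> {..<m}\<close> by simp
  qed
  finally show ?thesis by simp
qed

lemma card_Int_parts_missing_one:
  assumes P: "multipartite_parts S N m T P" "\<And>i. i < m \<Longrightarrow> card (P i) = T" "finite S"
    and i: "i < m" "card (A \<inter> P i) < L"
  shows "card (A \<inter> (\<Union>i<m. P i)) \<le> (m - 1) * T + L"
proof -
  have "card (A \<inter> (\<Union>i<m. P i)) = card (A \<inter> P i) + (\<Sum>j\<in>{..<m} - {i}. card (A \<inter> P j))"
    using card_Int_parts[OF P(1,3)] i(1) by (simp add: sum.remove)
  also have "\<dots> \<le> L + (\<Sum>j\<in>{..<m} - {i}. T)"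
  proof (intro add_mono sum_mono)
    show "card (A \<inter> P j) \<le> T" if "j \<in> {..<m} - {i}" for j
    proof -
      have "j < m" using that by simp
      then have "finite (P j)" using finite_subset[OF multipartite_partsD(1)[OF P(1)] P(3)] by simp
      then show ?thesis using P(2)[OF \<open>j < m\<close>] by (metis card_mono inf_le2)
    qed
  qed (use i in simp)
  finally show ?thesis using i(1) by simp
qed

lemma sum_weighted_card_nbrs:
  fixes q :: "'a \<Rightarrow> real"
  assumes G: "graph_on S N" and W: "W \<subseteq> S"
  shows "(\<Sum>u\<in>S. q u * card (N u \<inter> W)) = (\<Sum>w\<in>W. sum q (N w))"
proof -
  have finS: "finite S" and finW: "finite W" using G W unfolding graph_on_def by (auto intro: finite_subset)
  have "{w\<in>W. w \<in> N u} = N u \<inter> W" for u by blast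
  then have "(\<Sum>u\<in>S. q u * card (N u \<inter> W)) = (\<Sum>u\<in>S. \<Sum>w\<in>{w\<in>W. w \<in> N u}. q u)"
    by (simp add: mult.commute)
  also have "\<dots> = (\<Sum>w\<in>W. \<Sum>u\<in>{u\<in>S. w \<in> N u}. q u)"
    by (rule sum.swap_restrict[OF finS finW])
  also have "\<dots> = (\<Sum>w\<in>W. sum q (N w))"
  proof (rule sum.cong[OF refl])
    fix w assume "w \<in> W"
    then have "{u\<in>S. w \<in> N u} = N w" using G W unfolding graph_on_def by blast
    then show "(\<Sum>u\<in>{u\<in>S. w \<in> N u}. q u) = sum q (N w)" by simp
  qed
  finally show ?thesis .
qed

lemma pigeonhole_fiber:
  assumes "finite B" "f ` A \<subseteq> B" "L * card B < card A"
  shows "\<exists>b\<in>B. L < card {a\<in>A. f a = b}"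
proof (rule ccontr)
  assume "\<not> ?thesis"
  then have small: "card {a\<in>A. f a = b} \<le> L" if "b \<in> B" for b
    using that by auto
  have "A = (\<Union>b\<in>B. {a\<in>A. f a = b})" using assms(2) by auto
  then have "card A \<le> (\<Sum>b\<in>B. card {a\<in>A. f a = b})" by (metis card_UN_le assms(1))
  also have "\<dots> \<le> (\<Sum>b\<in>B. L)" by (rule sum_mono) (rule small)
  also have "\<dots> = L * card B" by simp
  finally show False using assms(3) by simp
qed

lemma weight_card_nbrs_parts_le:
  fixes L :: nat
  assumes S: "finite S" "u \<in> S" and q: "spread_distribution S q \<eta>"
    and Q: "multipartite_parts S N M T Q" "\<And>i. i < M \<Longrightarrow> card (Q i) = T"
  defines "W \<equiv> \<Union>i<M. Q i"
  defines "R \<equiv> {u \<in> S - W. \<forall>i<M. L \<le> card (N u \<inter> Q i)}"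
  shows "q u * card (N u \<inter> W) \<le> (if u \<in> W then \<eta> * (M * T) else 0)
      + (if u \<in> R then q u * (M * T) else 0) + q u * ((M - 1) * T + L)"
proof -
  have q0: "0 \<le> q u" "q u \<le> \<eta>" using q S(2) unfolding spread_distribution_def by auto
  have "finite W" unfolding W_def using S(1) multipartite_partsD(1)[OF Q(1)] by (blast intro: finite_subset)
  then have "card (N u \<inter> W) \<le> card W" by (simp add: card_mono)
  moreover have "card W = M * T" unfolding W_def by (rule card_Union_parts[OF Q S(1)])
  ultimately have c: "real (card (N u \<inter> W)) \<le> real (M * T)" by (simp only: of_nat_le_iff)
  have rest: "0 \<le> q u * ((M - 1) * T + L)" using q0 by simp
  consider "u \<in> W" | "u \<in> R" | "u \<notin> W" "u \<notin> R" by blast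
  then show ?thesis
  proof cases
    case 1
    then have "u \<notin> R" unfolding R_def by blast
    moreover have "q u * card (N u \<inter> W) \<le> \<eta> * (M * T)" using q0 c by (intro mult_mono) auto
    ultimately show ?thesis using 1 rest by simp
  next
    case 2
    then have "u \<notin> W" unfolding R_def by blast
    moreover have "q u * card (N u \<inter> W) \<le> q u * (M * T)" using q0 c by (intro mult_left_mono) auto
    ultimately show ?thesis using 2 rest by simp
  next
    case 3
    then obtain i where i: "i < M" "card (N u \<inter> Q i) < L" using S(2) unfolding R_def by auto
    have "card (N u \<inter> W) \<le> (M - 1) * T + L"
      using card_Int_parts_missing_one[OF Q S(1) i] unfolding W_def by simp
    then have "real (card (N u \<inter> W)) \<le> real ((M - 1) * T + L)" by (simp only: of_nat_le_iff)
    then show ?thesis using 3 q0 by (simp add: mult_left_mono)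
  qed
qed

lemma sum_weight_card_nbrs_parts_le:
  fixes L :: nat
  assumes S: "finite S" and q: "spread_distribution S q \<eta>"
    and Q: "multipartite_parts S N M T Q" "\<And>i. i < M \<Longrightarrow> card (Q i) = T"
  defines "W \<equiv> \<Union>i<M. Q i"
  defines "R \<equiv> {u \<in> S - W. \<forall>i<M. L \<le> card (N u \<inter> Q i)}"
  shows "(\<Sum>u\<in>S. q u * card (N u \<inter> W)) \<le> real (M * T) * \<eta> * real (M * T) + sum q R * real (M * T)
      + real ((M - 1) * T) + real L"
proof -
  have WS: "W \<subseteq> S" unfolding W_def using multipartite_partsD(1)[OF Q(1)] by blast
  have "R \<subseteq> S" unfolding R_def by blast
  have filter: "(\<Sum>u\<in>S. if u \<in> X then f u else 0) = sum f X" if "X \<subseteq> S" for X f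
    using sum.inter_filter[OF S, of f "\<lambda>u. u \<in> X"] that by (simp add: Int_absorb1 Collect_conj_eq)
  have "(\<Sum>u\<in>S. q u * card (N u \<inter> W)) \<le> (\<Sum>u\<in>S. (if u \<in> W then \<eta> * (M * T) else 0)
      + (if u \<in> R then q u * (M * T) else 0) + q u * ((M - 1) * T + L))"
    using weight_card_nbrs_parts_le[OF S _ q Q] unfolding W_def R_def by (intro sum_mono) blast
  also have "\<dots> = card W * (\<eta> * (M * T)) + sum q R * (M * T) + (\<Sum>u\<in>S. q u) * ((M - 1) * T + L)"
    using filter[OF WS, of "\<lambda>_. \<eta> * (M * T)"] filter[OF \<open>R \<subseteq> S\<close>, of "\<lambda>u. q u * (M * T)"]
    by (simp add: sum.distrib sum_distrib_right)
  finally show ?thesis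
    using q card_Union_parts[OF Q S, folded W_def] unfolding spread_distribution_def
    by (simp add: algebra_simps)
qed

lemma rich_vertices_weight:
  fixes L :: nat
  assumes G: "graph_on S N" and q: "spread_distribution S q \<eta>"
    and Q: "multipartite_parts S N M T Q" "\<And>i. i < M \<Longrightarrow> card (Q i) = T" and M: "0 < M"
    and deg: "\<And>v. v \<in> S \<Longrightarrow> 1 - 1 / real M + \<epsilon> \<le> sum q (N v)"
  defines "W \<equiv> \<Union>i<M. Q i"
  defines "R \<equiv> {u \<in> S - W. \<forall>i<M. L \<le> card (N u \<inter> Q i)}"
  shows "real (M * T) * \<epsilon> \<le> real (M * T) * \<eta> * real (M * T) + sum q R * real (M * T) + real L"
proof -
  have finS: "finite S" using G unfolding graph_on_def by simp
  have WS: "W \<subseteq> S" unfolding W_def using multipartite_partsD(1)[OF Q(1)] by blast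
  have "card W = M * T" unfolding W_def by (rule card_Union_parts[OF Q finS])
  have "real (M * T) * (1 - 1 / real M + \<epsilon>) = (\<Sum>w\<in>W. 1 - 1 / real M + \<epsilon>)"
    using \<open>card W = M * T\<close> by simp
  also have "\<dots> \<le> (\<Sum>w\<in>W. sum q (N w))"
    using deg WS by (intro sum_mono) auto
  also have "\<dots> = (\<Sum>u\<in>S. q u * card (N u \<inter> W))"
    by (rule sum_weighted_card_nbrs[OF G WS, symmetric])
  also have "\<dots> \<le> real (M * T) * \<eta> * real (M * T) + sum q R * real (M * T) + real ((M - 1) * T) + real L"
    unfolding W_def R_def by (rule sum_weight_card_nbrs_parts_le[OF finS q Q])
  finally have "real (M * T) * (1 - 1 / real M + \<epsilon>)
      \<le> real (M * T) * \<eta> * real (M * T) + sum q R * real (M * T) + real ((M - 1) * T) + real L" .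
  moreover have "real (M * T) * (1 - 1 / real M + \<epsilon>) = real ((M - 1) * T) + real (M * T) * \<epsilon>"
    using M by (simp add: field_simps of_nat_diff)
  ultimately show ?thesis by linarith
qed

lemma multipartite_parts_extend:
  assumes G: "graph_on S N" and Q: "multipartite_parts S N M T Q"
    and U: "U \<subseteq> S - (\<Union>i<M. Q i)" "L \<le> card U"
    and B: "\<And>u. u \<in> U \<Longrightarrow> N u \<inter> (\<Union>i<M. Q i) = B"
    and BQ: "\<And>i. i < M \<Longrightarrow> L \<le> card (B \<inter> Q i)"
  shows "multipartite_parts S N (Suc M) L (\<lambda>i. if i < M then B \<inter> Q i else U)"
proof -
  define P where "P i = (if i < M then B \<inter> Q i else U)" for i
  have cross: "P i \<inter> P j = {} \<and> (\<forall>u\<in>P i. \<forall>v\<in>P j. v \<in> N u)"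
    if ij: "i < Suc M" "j < Suc M" "i \<noteq> j" for i j
  proof -
    consider "i < M" "j < M" | "i < M" "j = M" | "i = M" "j < M"
      using ij unfolding less_Suc_eq by blast
    then show ?thesis
    proof cases
      case 1
      then show ?thesis using multipartite_partsD(3,4)[OF Q _ _ ij(3)] unfolding P_def by auto
    next
      case 2
      have "v \<in> N u" if "u \<in> B \<inter> Q i" "v \<in> U" for u v
      proof -
        have "u \<in> N v" using B[OF \<open>v \<in> U\<close>] that by blast
        moreover have "u \<in> S" "v \<in> S" using that U multipartite_partsD(1)[OF Q \<open>i < M\<close>] by auto
        ultimately show ?thesis using G unfolding graph_on_def by blast
      qed
      then show ?thesis using 2 U unfolding P_def by auto
    next
      case 3
      then show ?thesis using U B unfolding P_def by auto
    qed
  qed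
  have "P i \<subseteq> S \<and> L \<le> card (P i)" if "i < Suc M" for i
    using multipartite_partsD(1)[OF Q] U BQ unfolding P_def by auto
  with cross have "multipartite_parts S N (Suc M) L P"
    unfolding multipartite_parts_def by blast
  then show ?thesis unfolding P_def .
qed

lemma multipartite_parts_of_rich_vertices:
  assumes G: "graph_on S N" and Q: "multipartite_parts S N M T Q" "\<And>i. i < M \<Longrightarrow> card (Q i) = T"
    and R: "R \<subseteq> S - (\<Union>i<M. Q i)" "\<And>u i. u \<in> R \<Longrightarrow> i < M \<Longrightarrow> L \<le> card (N u \<inter> Q i)"
    and many: "L * 2 ^ (M * T) < card R"
  shows "\<exists>P. multipartite_parts S N (Suc M) L P"
proof -
  define W where "W = (\<Union>i<M. Q i)"
  have finS: "finite S" using G unfolding graph_on_def by simp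
  have finW: "finite W"
    unfolding W_def using finS multipartite_partsD(1)[OF Q(1)] by (blast intro: finite_subset)
  have "card W = M * T" unfolding W_def by (rule card_Union_parts[OF Q finS])
  then have "L * card (Pow W) < card R" using many finW by (simp add: card_Pow)
  then obtain B where "B \<in> Pow W" and fiber: "L < card {u\<in>R. N u \<inter> W = B}"
    using pigeonhole_fiber[of "Pow W" "\<lambda>u. N u \<inter> W" R L] finW by auto
  define U where "U = {u\<in>R. N u \<inter> W = B}"
  obtain u0 where "u0 \<in> U" using fiber unfolding U_def by (metis card.empty empty_iff less_zeroE subsetI subset_antisym)
  have "L \<le> card (B \<inter> Q i)" if "i < M" for i
  proof -
    have "B \<inter> Q i = N u0 \<inter> Q i" using \<open>u0 \<in> U\<close> that unfolding U_def W_def by blast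
    then show ?thesis using R(2) \<open>u0 \<in> U\<close> that unfolding U_def by simp
  qed
  then have "multipartite_parts S N (Suc M) L (\<lambda>i. if i < M then B \<inter> Q i else U)"
    using fiber R(1) unfolding U_def W_def
    by (intro multipartite_parts_extend[OF G Q(1)]) auto
  then show ?thesis by blast
qed

lemma multipartite_parts_grow:
  fixes L :: nat
  assumes G: "graph_on S N" and q: "spread_distribution S q \<eta>" and \<eta>: "0 < \<eta>"
    and Q: "multipartite_parts S N M T Q" "\<And>i. i < M \<Longrightarrow> card (Q i) = T" and MT: "0 < M * T"
    and deg: "\<And>v. v \<in> S \<Longrightarrow> 1 - 1 / real M + \<epsilon> \<le> sum q (N v)"
    and small: "real (M * T) * \<eta> \<le> \<epsilon> / 4" "(real L + 1) * 2 ^ (M * T) * \<eta> \<le> \<epsilon> / 2"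
      "real L \<le> real T * \<epsilon> / 4"
  shows "\<exists>P. multipartite_parts S N (Suc M) L P"
proof -
  define n where "n = real (M * T)"
  have n: "0 < n" unfolding n_def using MT by (simp only: of_nat_0_less_iff)
  have "n * \<eta> \<le> \<epsilon> / 4" using small(1) unfolding n_def .
  moreover have "0 < n * \<eta>" using n \<eta> by simp
  ultimately have "0 < \<epsilon>" by linarith
  define R where "R = {u \<in> S - (\<Union>i<M. Q i). \<forall>i<M. L \<le> card (N u \<inter> Q i)}"
  have "n * \<epsilon> \<le> n * \<eta> * n + sum q R * n + real L"
    using rich_vertices_weight[OF G q Q _ deg] MT unfolding n_def R_def by simp
  moreover have "n * \<eta> * n \<le> \<epsilon> / 4 * n" using small(1) n unfolding n_def by (intro mult_right_mono) auto
  moreover have "real T * \<epsilon> / 4 \<le> n * \<epsilon> / 4"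
    using MT \<open>0 < \<epsilon>\<close> unfolding n_def by (intro divide_right_mono mult_right_mono) auto
  ultimately have "n * (\<epsilon> / 2) \<le> n * sum q R" using small(3) by (simp add: algebra_simps)
  then have "\<epsilon> / 2 \<le> sum q R" using n by simp
  also have "sum q R \<le> real (card R) * \<eta>"
    using q sum_mono[of R q "\<lambda>_. \<eta>"] unfolding spread_distribution_def R_def by auto
  finally have "(real L + 1) * 2 ^ (M * T) \<le> real (card R)"
    using small(2) \<eta> by (meson mult_right_le_imp_le order_trans)
  then have "2 ^ (M * T) + real L * 2 ^ (M * T) \<le> real (card R)" by (simp add: algebra_simps)
  then have "real L * 2 ^ (M * T) < real (card R)" using zero_less_power[of "2::real" "M * T"] by linarith
  moreover have "real (L * 2 ^ (M * T)) = real L * 2 ^ (M * T)" by simp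
  ultimately have "L * 2 ^ (M * T) < card R" by linarith
  moreover have "R \<subseteq> S - (\<Union>i<M. Q i)" "\<And>u i. u \<in> R \<Longrightarrow> i < M \<Longrightarrow> L \<le> card (N u \<inter> Q i)"
    unfolding R_def by auto
  ultimately show ?thesis using multipartite_parts_of_rich_vertices[OF G Q] by blast
qed

lemma weighted_erdos_stone:
  assumes \<epsilon>: "0 < \<epsilon>"
  shows "\<exists>\<eta>>0. \<forall>(S :: 'a set) N q. graph_on S N \<and> spread_distribution S q \<eta> \<and>
      (m = 0 \<or> (\<forall>v\<in>S. 1 - 1 / real m + \<epsilon> \<le> sum q (N v)))
      \<longrightarrow> (\<exists>P. multipartite_parts S N (Suc m) L P)"
proof (induction m arbitrary: L)
  case 0
  show ?case
  proof (intro exI[of _ "1 / (real L + 1)"] conjI allI impI)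
    fix S :: "'a set" and N q
    assume "graph_on S N \<and> spread_distribution S q (1 / (real L + 1)) \<and>
      (0 = (0::nat) \<or> (\<forall>v\<in>S. 1 - 1 / real (0::nat) + \<epsilon> \<le> sum q (N v)))"
    then have "1 \<le> real (card S) * (1 / (real L + 1))" by (blast intro: spread_distribution_card)
    then have "L \<le> card S" by (simp add: field_simps)
    then have "multipartite_parts S N (Suc 0) L (\<lambda>_. S)" unfolding multipartite_parts_def by simp
    then show "\<exists>P. multipartite_parts S N (Suc 0) L P" by blast
  qed simp
next
  case (Suc m)
  define M where "M = Suc m"
  define T where "T = nat \<lceil>4 * real L / \<epsilon>\<rceil> + 1"
  have "4 * real L / \<epsilon> \<le> real T" unfolding T_def by linarith
  then have T: "0 < T" "real L \<le> real T * \<epsilon> / 4" using \<epsilon> by (auto simp: T_def field_simps)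
  obtain \<eta>0 where "0 < \<eta>0" and IH: "\<forall>(S :: 'a set) N q. graph_on S N \<and> spread_distribution S q \<eta>0 \<and>
      (m = 0 \<or> (\<forall>v\<in>S. 1 - 1 / real m + \<epsilon> \<le> sum q (N v)))
      \<longrightarrow> (\<exists>P. multipartite_parts S N (Suc m) T P)"
    using Suc.IH[of T] by blast
  have MT: "0 < M * T" unfolding M_def using T(1) by simp
  define n where "n = real (M * T)"
  define K where "K = (real L + 1) * 2 ^ (M * T)"
  have n: "0 < n" unfolding n_def using MT by (simp only: of_nat_0_less_iff)
  have K: "0 < K" unfolding K_def by simp
  define \<eta> where "\<eta> = min \<eta>0 (min (\<epsilon> / (4 * n)) (\<epsilon> / (2 * K)))"
  have "\<eta> \<le> \<epsilon> / (4 * n)" "\<eta> \<le> \<epsilon> / (2 * K)" unfolding \<eta>_def by auto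
  then have "\<eta> * (4 * n) \<le> \<epsilon>" "\<eta> * (2 * K) \<le> \<epsilon>" using n K by (simp_all add: pos_le_divide_eq)
  moreover have "\<eta> * (4 * n) = 4 * (n * \<eta>)" "\<eta> * (2 * K) = 2 * (K * \<eta>)"
    by (simp_all add: algebra_simps)
  ultimately have "n * \<eta> \<le> \<epsilon> / 4" "K * \<eta> \<le> \<epsilon> / 2" by linarith+
  moreover have "0 < \<eta>" "\<eta> \<le> \<eta>0" using \<open>0 < \<eta>0\<close> \<epsilon> n K unfolding \<eta>_def by auto
  ultimately have \<eta>: "0 < \<eta>" "\<eta> \<le> \<eta>0" "real (M * T) * \<eta> \<le> \<epsilon> / 4"
    "(real L + 1) * 2 ^ (M * T) * \<eta> \<le> \<epsilon> / 2"
    unfolding n_def K_def by auto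
  show ?case
  proof (intro exI[of _ \<eta>] conjI allI impI)
    show "0 < \<eta>" by (fact \<eta>(1))
    fix S :: "'a set" and N q
    assume "graph_on S N \<and> spread_distribution S q \<eta> \<and>
      (Suc m = 0 \<or> (\<forall>v\<in>S. 1 - 1 / real (Suc m) + \<epsilon> \<le> sum q (N v)))"
    then have G: "graph_on S N" and q: "spread_distribution S q \<eta>"
      and deg: "\<And>v. v \<in> S \<Longrightarrow> 1 - 1 / real M + \<epsilon> \<le> sum q (N v)"
      unfolding M_def by auto
    have "m = 0 \<or> (\<forall>v\<in>S. 1 - 1 / real m + \<epsilon> \<le> sum q (N v))"
    proof (cases "m = 0")
      case False
      then have "1 / real M \<le> 1 / real m" unfolding M_def by (simp add: frac_le)
      then show ?thesis using deg by force
    qed simp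
    then obtain P where "multipartite_parts S N M T P"
      using IH[rule_format, of S N q] spread_distribution_mono[OF q \<eta>(2)] G unfolding M_def by blast
    then obtain Q where Q: "multipartite_parts S N M T Q" "\<And>i. i < M \<Longrightarrow> card (Q i) = T"
      using multipartite_parts_exact by blast
    show "\<exists>P. multipartite_parts S N (Suc (Suc m)) L P"
      using multipartite_parts_grow[OF G q \<eta>(1) Q MT deg \<eta>(3,4) T(2)] unfolding M_def .
  qed
qed

lemma multipartite_parts_mono:
  assumes "multipartite_parts S N' m L P" "S \<subseteq> V" "\<And>u. N' u \<subseteq> N u"
  shows "multipartite_parts V N m L P"
  using assms unfolding multipartite_parts_def by blast

lemma spectral_erdos_stone:
  assumes \<epsilon>: "0 < \<epsilon>"
  shows "\<exists>n1. \<forall>(V :: 'a set) N w \<mu>. graph_on V N \<and> n1 \<le> card V \<and>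
      (\<forall>i. 0 \<le> w i) \<and> (\<exists>i\<in>V. 0 < w i) \<and> (\<forall>i\<in>V. \<mu> * w i \<le> sum w (N i)) \<and>
      real (card V) * (1 - 1 / real m + \<epsilon>) \<le> \<mu> \<longrightarrow> (\<exists>P. multipartite_parts V N (Suc m) L P)"
proof -
  define \<alpha> where "\<alpha> = 1 - 1 / real m"
  have "0 \<le> \<alpha>" unfolding \<alpha>_def by (cases m) (auto simp: field_simps)
  define \<gamma> where "\<gamma> = \<alpha> + \<epsilon> / 2"
  define \<delta> where "\<delta> = \<epsilon> / 2"
  have \<gamma>: "0 < \<gamma>" and \<delta>: "0 < \<delta>" using \<open>0 \<le> \<alpha>\<close> \<epsilon> unfolding \<gamma>_def \<delta>_def by auto
  obtain \<eta> where "0 < \<eta>" and ES: "\<forall>(S :: 'a set) N q. graph_on S N \<and> spread_distribution S q \<eta> \<and>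
      (m = 0 \<or> (\<forall>v\<in>S. 1 - 1 / real m + \<epsilon> / 4 \<le> sum q (N v)))
      \<longrightarrow> (\<exists>P. multipartite_parts S N (Suc m) L P)"
    using weighted_erdos_stone[of "\<epsilon> / 4" m L] \<epsilon> by auto
  define \<theta> where "\<theta> = min \<eta> (\<epsilon> / (4 * \<gamma>))"
  have \<theta>: "0 < \<theta>" "\<theta> \<le> \<eta>" "\<gamma> * \<theta> \<le> \<epsilon> / 4"
    using \<open>0 < \<eta>\<close> \<epsilon> \<gamma> unfolding \<theta>_def by (auto simp: min_def field_simps)
  define n1 where "n1 = nat \<lceil>1 / (\<theta> * \<epsilon> * sqrt \<delta>)\<rceil>"
  have "\<exists>P. multipartite_parts V N (Suc m) L P"
    if G: "graph_on V N" and n1: "n1 \<le> card V" and w: "\<And>i. 0 \<le> w i" "\<exists>i\<in>V. 0 < w i"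
      and eig: "\<And>i. i \<in> V \<Longrightarrow> \<mu> * w i \<le> sum w (N i)"
      and \<mu>: "real (card V) * (1 - 1 / real m + \<epsilon>) \<le> \<mu>" for V :: "'a set" and N w \<mu>
  proof -
    define n where "n = real (card V)"
    have finV: "finite V" using G unfolding graph_on_def by simp
    have "V \<noteq> {}" using w(2) by blast
    then have n: "1 \<le> n" unfolding n_def using finV by (simp add: Suc_le_eq card_gt_0_iff)
    have "n * (1 - 1 / real m + \<epsilon>) = n * \<alpha> + n * \<epsilon>" unfolding \<alpha>_def by (simp add: algebra_simps)
    moreover have "0 \<le> n * \<alpha>" "0 < n * \<epsilon>" using n \<open>0 \<le> \<alpha>\<close> \<epsilon> by simp_all
    ultimately have "n * \<epsilon> \<le> \<mu>" "0 < \<mu>" using \<mu> unfolding n_def by linarith+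
    obtain p where p: "\<And>i. 0 \<le> p i" "sum p V = 1" "\<And>i. i \<in> V \<Longrightarrow> \<mu> * p i \<le> sum p (N i)"
      using eigen_weight_normalize[OF finV w eig] by blast
    have "(\<gamma> + \<delta>) * n \<le> \<mu>" using \<mu> unfolding \<gamma>_def \<delta>_def \<alpha>_def n_def by (simp add: algebra_simps)
    then have "\<gamma> + \<delta> \<le> \<mu> / card V" using n unfolding n_def by (simp add: pos_le_divide_eq)
    then obtain S q where S: "S \<subseteq> V" "sum q S = 1" and q: "\<And>v. v \<in> S \<Longrightarrow> 0 \<le> q v \<and> q v \<le> 1 / (\<mu> * sqrt \<delta>)"
      and deg: "\<And>v. v \<in> S \<Longrightarrow> \<gamma> - \<gamma> * q v \<le> sum q (N v \<inter> S)"
      using exists_spread_dense_subgraph[OF G p(1,2) \<open>0 < \<mu>\<close> p(3) less_imp_le[OF \<gamma>] \<delta>] by blast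
    have "1 / (\<mu> * sqrt \<delta>) \<le> \<theta>"
    proof -
      have "1 / (\<theta> * \<epsilon> * sqrt \<delta>) \<le> n" using n1 unfolding n1_def n_def by linarith
      then have "1 \<le> n * \<epsilon> * sqrt \<delta> * \<theta>" using \<theta>(1) \<epsilon> \<delta> by (simp add: field_simps)
      also have "\<dots> \<le> \<mu> * sqrt \<delta> * \<theta>" using \<open>n * \<epsilon> \<le> \<mu>\<close> \<theta>(1) \<delta> by (intro mult_right_mono) auto
      finally show ?thesis using \<open>0 < \<mu>\<close> \<delta> by (simp add: field_simps)
    qed
    then have "spread_distribution S q \<eta>"
      unfolding spread_distribution_def using q S(2) \<theta>(2) by force
    moreover have "1 - 1 / real m + \<epsilon> / 4 \<le> sum q (N v \<inter> S)" if "v \<in> S" for v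
    proof -
      have "\<gamma> * q v \<le> \<gamma> * \<theta>" using q[OF that] \<open>1 / (\<mu> * sqrt \<delta>) \<le> \<theta>\<close> \<gamma> by (intro mult_left_mono) auto
      then show ?thesis using deg[OF that] \<theta>(3) unfolding \<gamma>_def \<alpha>_def by linarith
    qed
    ultimately obtain P where "multipartite_parts S (\<lambda>v. N v \<inter> S) (Suc m) L P"
      using ES graph_on_restrict[OF G S(1)] by blast
    then show "\<exists>P. multipartite_parts V N (Suc m) L P"
      using multipartite_parts_mono[OF _ S(1)] by blast
  qed
  then show ?thesis by (intro exI[of _ n1]) blast
qed

definition edge_through :: "'a set set \<Rightarrow> 'a \<Rightarrow> 'a \<Rightarrow> 'a set" where
  "edge_through E a b = (if a = b then {} else \<Union>{e\<in>E. a \<in> e \<and> b \<in> e})"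

definition pair_span :: "'a set set \<Rightarrow> 'a set \<Rightarrow> 'a set" where
  "pair_span E X = \<Union>{e\<in>E. 2 \<le> card (e \<inter> X)}"

definition pair_span_link :: "'a set set \<Rightarrow> 'a set \<Rightarrow> 'a set" where
  "pair_span_link E X = \<Union>{e\<in>E. e \<inter> X \<noteq> {} \<and> e \<inter> (pair_span E X - X) \<noteq> {}}"

definition loose_set :: "'a set set \<Rightarrow> 'a set \<Rightarrow> bool" where
  "loose_set E X \<longleftrightarrow> (\<forall>e\<in>E. card (e \<inter> X) \<le> 2) \<and>
     (\<forall>e\<in>E. \<forall>e'\<in>E. e \<noteq> e' \<longrightarrow> card (e \<inter> X) = 2 \<longrightarrow> card (e' \<inter> X) = 2 \<longrightarrow> (e - X) \<inter> (e' - X) = {})"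

lemma loose_setD:
  assumes "loose_set E X" "e \<in> E" "e' \<in> E" "e \<noteq> e'" "card (e \<inter> X) = 2" "card (e' \<inter> X) = 2"
  shows "(e - X) \<inter> (e' - X) = {}"
  using assms unfolding loose_set_def by blast

lemma edge_through_subset: "uniform_hypergraph r V E \<Longrightarrow> edge_through E a b \<subseteq> V"
  unfolding edge_through_def uniform_hypergraph_def by auto

lemma card_edge_through_le:
  assumes U: "uniform_hypergraph r V E" and Lin: "linear_hypergraph E"
  shows "card (edge_through E a b) \<le> r"
proof (cases "a \<noteq> b \<and> (\<exists>e\<in>E. a \<in> e \<and> b \<in> e)")
  case True
  then obtain e0 where e0: "e0 \<in> E" "a \<in> e0" "b \<in> e0" and "a \<noteq> b" by blast
  have fin: "finite e" "card e = r" if "e \<in> E" for e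
    using U that unfolding uniform_hypergraph_def by (auto intro: finite_subset)
  have "{e\<in>E. a \<in> e \<and> b \<in> e} = {e0}"
    using linear_hypergraph_edge_eq[OF Lin _ e0(1) fin(1) _ _ e0(2,3) \<open>a \<noteq> b\<close>] e0 by blast
  then show ?thesis unfolding edge_through_def using \<open>a \<noteq> b\<close> fin[OF e0(1)] by simp
next
  case False
  then have "edge_through E a b = {}" unfolding edge_through_def by auto
  then show ?thesis by simp
qed

lemma pair_span_subset: "pair_span E X \<subseteq> (\<Union>(a, b)\<in>X \<times> X. edge_through E a b)"
proof
  fix x assume "x \<in> pair_span E X"
  then obtain e where e: "e \<in> E" "2 \<le> card (e \<inter> X)" "x \<in> e" unfolding pair_span_def by blast
  have "finite (e \<inter> X)" using e(2) by (intro card_ge_0_finite) simp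
  then have "\<not> card (e \<inter> X) \<le> Suc 0" using e(2) by simp
  then have "\<not> (\<forall>a\<in>e \<inter> X. \<forall>b\<in>e \<inter> X. a = b)"
    using card_le_Suc0_iff_eq[OF \<open>finite (e \<inter> X)\<close>] by blast
  then obtain a b where ab: "a \<in> e \<inter> X" "b \<in> e \<inter> X" "a \<noteq> b" by blast
  then have "x \<in> edge_through E a b" unfolding edge_through_def using e by auto
  then show "x \<in> (\<Union>(a, b)\<in>X \<times> X. edge_through E a b)"
    using ab by (intro UN_I[of "(a, b)"]) auto
qed

lemma pair_span_link_subset:
  "pair_span_link E X \<subseteq> (\<Union>(a, b)\<in>X \<times> pair_span E X. edge_through E a b)"
proof
  fix x assume "x \<in> pair_span_link E X"
  then obtain e s w where e: "e \<in> E" "x \<in> e" "s \<in> e \<inter> X" "w \<in> e \<inter> (pair_span E X - X)"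
    unfolding pair_span_link_def by blast
  then have "x \<in> edge_through E s w" unfolding edge_through_def by auto
  then show "x \<in> (\<Union>(a, b)\<in>X \<times> pair_span E X. edge_through E a b)"
    using e by (intro UN_I[of "(s, w)"]) auto
qed

lemma card_UN_edge_through_le:
  assumes U: "uniform_hypergraph r V E" and Lin: "linear_hypergraph E" and "finite A" "finite B"
  shows "finite (\<Union>(a, b)\<in>A \<times> B. edge_through E a b)"
    and "card (\<Union>(a, b)\<in>A \<times> B. edge_through E a b) \<le> r * card A * card B"
proof -
  show "finite (\<Union>(a, b)\<in>A \<times> B. edge_through E a b)"
    using edge_through_subset[OF U] U unfolding uniform_hypergraph_def
    by (blast intro: finite_subset)
  have "card (\<Union>(a, b)\<in>A \<times> B. edge_through E a b) \<le> (\<Sum>(a, b)\<in>A \<times> B. card (edge_through E a b))"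
    using card_UN_le[of "A \<times> B" "\<lambda>(a, b). edge_through E a b"] assms(3,4) by (simp add: case_prod_unfold)
  also have "\<dots> \<le> (\<Sum>(a, b)\<in>A \<times> B. r)"
    using card_edge_through_le[OF U Lin] by (intro sum_mono) (simp add: case_prod_unfold)
  finally show "card (\<Union>(a, b)\<in>A \<times> B. edge_through E a b) \<le> r * card A * card B"
    by (simp add: card_cartesian_product ac_simps)
qed

lemma card_pair_span_le:
  assumes U: "uniform_hypergraph r V E" and Lin: "linear_hypergraph E" and X: "finite X"
  shows "finite (pair_span E X)" "card (pair_span E X) \<le> r * card X * card X"
    and "finite (pair_span_link E X)" "card (pair_span_link E X) \<le> r * card X * (r * card X * card X)"
proof -
  note span = card_UN_edge_through_le[OF U Lin X X]
  show fin: "finite (pair_span E X)" using finite_subset[OF pair_span_subset span(1)] .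
  show card: "card (pair_span E X) \<le> r * card X * card X"
    using card_mono[OF span(1) pair_span_subset] span(2) by linarith
  note link = card_UN_edge_through_le[OF U Lin X fin]
  show "finite (pair_span_link E X)" using finite_subset[OF pair_span_link_subset link(1)] .
  have "card (pair_span_link E X) \<le> r * card X * card (pair_span E X)"
    using card_mono[OF link(1) pair_span_link_subset] link(2) by linarith
  also have "\<dots> \<le> r * card X * (r * card X * card X)" using card by simp
  finally show "card (pair_span_link E X) \<le> r * card X * (r * card X * card X)" .
qed

lemma loose_set_insert:
  assumes Lin: "linear_hypergraph E" and fin: "\<And>e. e \<in> E \<Longrightarrow> finite e"
    and X: "loose_set E X" and t: "t \<notin> X" "t \<notin> pair_span E X" "t \<notin> pair_span_link E X"
  shows "loose_set E (insert t X)"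
proof -
  have card_insert: "card (e \<inter> insert t X) = card (e \<inter> X) + (if t \<in> e then 1 else 0)" if "e \<in> E" for e
    using fin[OF that] t(1) by (simp add: Int_insert_right card_insert_if)
  have through_t: "card (e \<inter> X) \<le> 1" if "e \<in> E" "t \<in> e" for e
    using t(2) that unfolding pair_span_def by force
  have le2: "card (e \<inter> insert t X) \<le> 2" if "e \<in> E" for e
    using X that card_insert[OF that] through_t[OF that] unfolding loose_set_def by (cases "t \<in> e") auto
  have one_side: False
    if e: "e \<in> E" "e' \<in> E" "t \<in> e" "t \<notin> e'" "card (e \<inter> insert t X) = 2" "card (e' \<inter> insert t X) = 2"
      and w: "w \<in> e - insert t X" "w \<in> e' - insert t X" for e e' w
  proof -
    have "card (e' \<inter> X) = 2" using card_insert[OF e(2)] e by simp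
    then have "w \<in> pair_span E X - X" unfolding pair_span_def using e(2) w by auto
    moreover have "card (e \<inter> X) = 1" using card_insert[OF e(1)] e by simp
    then have "e \<inter> X \<noteq> {}" by force
    ultimately have "e \<subseteq> pair_span_link E X" unfolding pair_span_link_def using e(1) w(1) by blast
    then show False using t(3) e(3) by blast
  qed
  have "(e - insert t X) \<inter> (e' - insert t X) = {}"
    if e: "e \<in> E" "e' \<in> E" "e \<noteq> e'" "card (e \<inter> insert t X) = 2" "card (e' \<inter> insert t X) = 2" for e e'
  proof (rule ccontr)
    assume "(e - insert t X) \<inter> (e' - insert t X) \<noteq> {}"
    then obtain w where w: "w \<in> e - insert t X" "w \<in> e' - insert t X" by blast
    consider "t \<in> e" "t \<in> e'" | "t \<in> e" "t \<notin> e'" | "t \<notin> e" "t \<in> e'" | "t \<notin> e" "t \<notin> e'" by blast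
    then show False
    proof cases
      case 1
      then show False using linear_hypergraph_edge_eq[OF Lin e(1,2) fin[OF e(1)], of t w] w e(3) by blast
    next
      case 2
      then show False using one_side[OF e(1,2) _ _ e(4,5) w] by blast
    next
      case 3
      then show False using one_side[OF e(2,1) _ _ e(5,4) w(2,1)] by blast
    next
      case 4
      then have "card (e \<inter> X) = 2" "card (e' \<inter> X) = 2" using card_insert e by auto
      then show False using X e(1-3) w unfolding loose_set_def by blast
    qed
  qed
  then show ?thesis using le2 unfolding loose_set_def by blast
qed

lemma exists_loose_transversal:
  assumes U: "uniform_hypergraph r V E" and Lin: "linear_hypergraph E" and D: "finite D"
    and large: "\<And>x. x \<in> D \<Longrightarrow>
      card D + r * card D * card D + r * card D * (r * card D * card D) < card (P x)"
  shows "\<exists>\<sigma>. inj_on \<sigma> D \<and> (\<forall>x\<in>D. \<sigma> x \<in> P x) \<and> loose_set E (\<sigma> ` D)"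
proof -
  define K where "K = card D"
  have fin: "finite e" if "e \<in> E" for e
    using U that unfolding uniform_hypergraph_def by (auto intro: finite_subset)
  have "\<exists>\<sigma>. inj_on \<sigma> D' \<and> (\<forall>x\<in>D'. \<sigma> x \<in> P x) \<and> loose_set E (\<sigma> ` D')" if "D' \<subseteq> D" for D'
    using finite_subset[OF that D] that
  proof (induction D' rule: finite_subset_induct')
    case empty
    show ?case by (simp add: loose_set_def)
  next
    case (insert a D')
    then obtain \<sigma> where \<sigma>: "inj_on \<sigma> D'" "\<forall>x\<in>D'. \<sigma> x \<in> P x" "loose_set E (\<sigma> ` D')" by blast
    define X where "X = \<sigma> ` D'"
    have "finite X" unfolding X_def using insert(1) by simp
    have "card X \<le> K" unfolding X_def K_def
      using card_image_le[OF insert(1), of \<sigma>] card_mono[OF D insert(3)] by simp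
    note span = card_pair_span_le[OF U Lin \<open>finite X\<close>]
    have "card (X \<union> pair_span E X \<union> pair_span_link E X) \<le> card X + card (pair_span E X) + card (pair_span_link E X)"
      by (meson card_Un_le add_le_mono order_trans le_refl)
    also have "\<dots> \<le> K + r * K * K + r * K * (r * K * K)"
    proof -
      have "r * card X * card X \<le> r * K * K" "r * card X * (r * card X * card X) \<le> r * K * (r * K * K)"
        using \<open>card X \<le> K\<close> by (simp_all add: mult_le_mono)
      then show ?thesis using span(2,4) \<open>card X \<le> K\<close> by linarith
    qed
    also have "\<dots> < card (P a)" using large[OF insert(2)] unfolding K_def .
    finally have "\<not> P a \<subseteq> X \<union> pair_span E X \<union> pair_span_link E X"
      using card_mono[of "X \<union> pair_span E X \<union> pair_span_link E X" "P a"] \<open>finite X\<close> span(1,3) by auto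
    then obtain t where t: "t \<in> P a" "t \<notin> X" "t \<notin> pair_span E X" "t \<notin> pair_span_link E X" by blast
    have "inj_on (\<sigma>(a := t)) (insert a D')"
      using \<sigma>(1) t(2) insert(4) unfolding X_def by (auto simp: inj_on_def)
    moreover have "\<forall>x\<in>insert a D'. (\<sigma>(a := t)) x \<in> P x" using \<sigma>(2) t(1) by simp
    moreover have "(\<sigma>(a := t)) ` insert a D' = insert t X"
      unfolding X_def using insert(4) by (auto intro: image_cong)
    then have "loose_set E ((\<sigma>(a := t)) ` insert a D')"
      using loose_set_insert[OF Lin fin \<sigma>(3)[folded X_def] t(2-4)] by simp
    ultimately show ?case by blast
  qed
  then show ?thesis by blast
qed

lemma loose_set_edge_trace:
  assumes "loose_set E X" "finite X" "e \<in> E" "Y \<subseteq> e \<inter> X" "card Y = 2"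
  shows "e \<inter> X = Y"
  using assms unfolding loose_set_def by (intro card_seteq[symmetric]) auto

definition expansion_map :: "('b \<Rightarrow> 'a) \<Rightarrow> ('b set \<Rightarrow> 'a list) \<Rightarrow> 'b + 'b set \<times> nat \<Rightarrow> 'a" where
  "expansion_map \<sigma> xs z = (case z of Inl p \<Rightarrow> \<sigma> p | Inr (g, j) \<Rightarrow> xs g ! j)"

lemma expansion_verts_cases:
  assumes "z \<in> expansion_verts r W F"
  obtains p where "p \<in> W" "z = Inl p" | g j where "g \<in> F" "j < r - 2" "z = Inr (g, j)"
  using assms unfolding expansion_verts_def by blast

lemma inj_on_expansion_map:
  assumes inj: "inj_on \<sigma> W"
    and xs: "\<And>g. g \<in> F \<Longrightarrow> distinct (xs g) \<and> length (xs g) = r - 2 \<and> set (xs g) \<inter> \<sigma> ` W = {}"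
    and disj: "\<And>g g'. g \<in> F \<Longrightarrow> g' \<in> F \<Longrightarrow> g \<noteq> g' \<Longrightarrow> set (xs g) \<inter> set (xs g') = {}"
  shows "inj_on (expansion_map \<sigma> xs) (expansion_verts r W F)"
proof (rule inj_onI)
  have new: "xs g ! j \<in> set (xs g) - \<sigma> ` W" if "g \<in> F" "j < r - 2" for g j
  proof -
    have "xs g ! j \<in> set (xs g)" using xs[OF that(1)] that(2) by (intro nth_mem) simp
    then show ?thesis using xs[OF that(1)] by blast
  qed
  fix z z' assume z: "z \<in> expansion_verts r W F" and z': "z' \<in> expansion_verts r W F"
    and eq: "expansion_map \<sigma> xs z = expansion_map \<sigma> xs z'"
  show "z = z'"
  proof (cases rule: expansion_verts_cases[OF z]; cases rule: expansion_verts_cases[OF z'])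
    fix p p' assume "p \<in> W" "z = Inl p" "p' \<in> W" "z' = Inl p'"
    then show ?thesis using eq inj unfolding expansion_map_def by (simp add: inj_on_eq_iff)
  next
    fix p g j assume pgj: "p \<in> W" "z = Inl p" "g \<in> F" "j < r - 2" "z' = Inr (g, j)"
    then have "xs g ! j = \<sigma> p" using eq unfolding expansion_map_def by simp
    then show ?thesis using new[OF pgj(3,4)] pgj(1) by blast
  next
    fix p g j assume pgj: "g \<in> F" "j < r - 2" "z = Inr (g, j)" "p \<in> W" "z' = Inl p"
    then have "xs g ! j = \<sigma> p" using eq unfolding expansion_map_def by simp
    then show ?thesis using new[OF pgj(1,2)] pgj(4) by blast
  next
    fix g j g' j' assume gj: "g \<in> F" "j < r - 2" "z = Inr (g, j)" "g' \<in> F" "j' < r - 2" "z' = Inr (g', j')"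
    show ?thesis
    proof (cases "g = g'")
      case True
      then show ?thesis using eq gj xs[OF gj(1)] unfolding expansion_map_def by (simp add: nth_eq_iff_index_eq)
    next
      case False
      then show ?thesis using eq gj new[OF gj(1,2)] new[OF gj(4,5)] disj[OF gj(1,4)] unfolding expansion_map_def
        by auto
    qed
  qed
qed

lemma expansion_embedding:
  fixes \<sigma> :: "'b \<Rightarrow> 'a" and h :: "'b set \<Rightarrow> 'a set" and W :: "'b set"
  defines "X \<equiv> \<sigma> ` W"
  assumes inj: "inj_on \<sigma> W" and XV: "X \<subseteq> V" and EV: "\<And>e. e \<in> E \<Longrightarrow> e \<subseteq> V"
    and h: "\<And>g. g \<in> F \<Longrightarrow> h g \<in> E" "\<And>g. g \<in> F \<Longrightarrow> h g \<inter> X = \<sigma> ` g"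
    and outside: "\<And>g. g \<in> F \<Longrightarrow> finite (h g - X) \<and> card (h g - X) = r - 2"
    and disj: "\<And>g g'. g \<in> F \<Longrightarrow> g' \<in> F \<Longrightarrow> g \<noteq> g' \<Longrightarrow> (h g - X) \<inter> (h g' - X) = {}"
  shows "contains_hg V E (expansion_verts r W F) (expansion_edges r F)"
proof -
  define xs where "xs g = (SOME xs. distinct xs \<and> set xs = h g - X)" for g
  have xs: "distinct (xs g) \<and> set (xs g) = h g - X \<and> length (xs g) = r - 2" if "g \<in> F" for g
  proof -
    have "\<exists>xs. distinct xs \<and> set xs = h g - X" using outside[OF that] finite_distinct_list by blast
    then have "distinct (xs g) \<and> set (xs g) = h g - X" unfolding xs_def by (rule someI_ex)
    then show ?thesis using outside[OF that] distinct_card by metis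
  qed
  define f where "f = expansion_map \<sigma> xs"
  have "inj_on f (expansion_verts r W F)"
    unfolding f_def using xs disj unfolding X_def by (intro inj_on_expansion_map[OF inj]) auto
  moreover have "f z \<in> V" if "z \<in> expansion_verts r W F" for z
  proof (cases rule: expansion_verts_cases[OF that])
    case (1 p)
    then show ?thesis using XV unfolding X_def f_def expansion_map_def by auto
  next
    case (2 g j)
    have "xs g ! j \<in> set (xs g)" using xs[OF 2(1)] 2(2) by (intro nth_mem) simp
    then have "xs g ! j \<in> h g" using xs[OF 2(1)] by blast
    then show ?thesis using 2 EV[OF h(1)[OF 2(1)]] unfolding f_def expansion_map_def by auto
  qed
  moreover have "f ` e \<in> E" if e_exp: "e \<in> expansion_edges r F" for e
  proof -
    obtain g where g: "g \<in> F" and e: "e = Inl ` g \<union> {Inr (g, j) | j. j < r - 2}"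
      using e_exp unfolding expansion_edges_def by blast
    have new: "{Inr (g, j) | j. j < r - 2} = (\<lambda>j. Inr (g, j)) ` {..<r - 2}" by auto
    have "f ` {Inr (g, j) | j. j < r - 2} = (\<lambda>j. xs g ! j) ` {..<r - 2}"
      unfolding new image_image f_def expansion_map_def by simp
    also have "\<dots> = set (xs g)" using xs[OF g] nth_image[of "r - 2" "xs g"] by (simp add: lessThan_atLeast0)
    finally have "f ` e = \<sigma> ` g \<union> set (xs g)"
      unfolding e by (simp add: image_Un image_image f_def expansion_map_def)
    also have "\<dots> = h g" using xs[OF g] h(2)[OF g] by blast
    finally show ?thesis using h(1)[OF g] by simp
  qed
  ultimately show ?thesis unfolding contains_hg_def by blast
qed

lemma loose_transversal_embeds_expansion:
  assumes U: "uniform_hypergraph r V E" and \<sigma>: "inj_on \<sigma> W" "finite W" "\<sigma> ` W \<subseteq> V"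
    and F: "\<And>g. g \<in> F \<Longrightarrow> g \<subseteq> W \<and> card g = 2"
    and loose: "loose_set E (\<sigma> ` W)" and cover: "\<And>g. g \<in> F \<Longrightarrow> \<exists>e\<in>E. \<sigma> ` g \<subseteq> e"
  shows "contains_hg V E (expansion_verts r W F) (expansion_edges r F)"
proof -
  define X where "X = \<sigma> ` W"
  have "finite X" unfolding X_def using \<sigma>(2) by simp
  have EV: "e \<subseteq> V" "card e = r" "finite e" if "e \<in> E" for e
    using U that unfolding uniform_hypergraph_def by (auto intro: finite_subset)
  define h where "h g = (SOME e. e \<in> E \<and> \<sigma> ` g \<subseteq> e)" for g
  have h: "h g \<in> E" "\<sigma> ` g \<subseteq> h g" if "g \<in> F" for g
    using someI_ex[OF cover[OF that, unfolded Bex_def]] unfolding h_def by auto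
  have card_image: "card (\<sigma> ` g) = 2" if "g \<in> F" for g
    using F[OF that] card_image[OF inj_on_subset[OF \<sigma>(1)]] by metis
  have trace: "h g \<inter> X = \<sigma> ` g" if "g \<in> F" for g
    using loose_set_edge_trace[OF loose[folded X_def] \<open>finite X\<close> h(1)[OF that] _ card_image[OF that]]
      h(2)[OF that] F[OF that] unfolding X_def by blast
  have outside: "finite (h g - X) \<and> card (h g - X) = r - 2" if "g \<in> F" for g
  proof -
    have "finite (h g)" using EV(3)[OF h(1)[OF that]] .
    then have "card (h g - X) = card (h g) - card (h g \<inter> X)" by (intro card_Diff_subset_Int) simp
    then show ?thesis using \<open>finite (h g)\<close> EV(2)[OF h(1)[OF that]] trace[OF that] card_image[OF that] by simp
  qed
  have disj: "(h g - X) \<inter> (h g' - X) = {}" if "g \<in> F" "g' \<in> F" "g \<noteq> g'" for g g'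
  proof -
    have "\<sigma> ` g \<noteq> \<sigma> ` g'"
      using inj_on_image_eq_iff[OF \<sigma>(1)] F[OF that(1)] F[OF that(2)] that(3) by blast
    have "h g \<noteq> h g'"
    proof
      assume "h g = h g'"
      have "\<sigma> ` g = h g \<inter> X" using trace[OF that(1)] by simp
      also have "\<dots> = \<sigma> ` g'" using trace[OF that(2)] \<open>h g = h g'\<close> by simp
      finally show False using \<open>\<sigma> ` g \<noteq> \<sigma> ` g'\<close> by simp
    qed
    then show ?thesis
      using loose_setD[OF loose[folded X_def] h(1)[OF that(1)] h(1)[OF that(2)]]
        trace[OF that(1)] trace[OF that(2)] card_image[OF that(1)] card_image[OF that(2)] by simp
  qed
  show ?thesis
    by (rule expansion_embedding[OF \<sigma>(1) \<sigma>(3) EV(1) h(1) trace[unfolded X_def] outside[unfolded X_def]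
          disj[unfolded X_def]])
qed

definition expansion_part_size :: "nat \<Rightarrow> nat \<Rightarrow> nat \<Rightarrow> nat" where
  "expansion_part_size k l r = (let K = k * l in K + r * K * K + r * K * (r * K * K) + 1)"

lemma multipartite_shadow_contains_expansion:
  assumes U: "uniform_hypergraph r V E" and Lin: "linear_hypergraph E"
    and P: "multipartite_parts V (shadow_nbrs E) k (expansion_part_size k l r) P"
  shows "contains_hg V E (expansion_verts r (Kkl_verts k l) (Kkl_edges k l)) (expansion_edges r (Kkl_edges k l))"
proof -
  define D where "D = Kkl_verts k l"
  have D: "finite D" "\<And>x. x \<in> D \<Longrightarrow> fst x < k" "card D = k * l" unfolding D_def Kkl_verts_def by auto
  have large: "card D + r * card D * card D + r * card D * (r * card D * card D) < card (P (fst x))"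
    if "x \<in> D" for x
    using multipartite_partsD(2)[OF P D(2)[OF that]] D(3) unfolding expansion_part_size_def Let_def by simp
  obtain \<sigma> where \<sigma>: "inj_on \<sigma> D" "\<And>x. x \<in> D \<Longrightarrow> \<sigma> x \<in> P (fst x)" "loose_set E (\<sigma> ` D)"
    using exists_loose_transversal[OF U Lin D(1), where P = "\<lambda>x. P (fst x)"] large by blast
  show ?thesis
    unfolding D_def[symmetric]
  proof (rule loose_transversal_embeds_expansion[OF U \<sigma>(1) D(1) _ _ \<sigma>(3)])
    show "\<sigma> ` D \<subseteq> V" using \<sigma>(2) D(2) multipartite_partsD(1)[OF P] by blast
    fix g assume "g \<in> Kkl_edges k l"
    then obtain i a j b where g: "g = {(i, a), (j, b)}" "i < k" "j < k" "a < l" "b < l" "i \<noteq> j"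
      unfolding Kkl_edges_def by blast
    then show "g \<subseteq> D \<and> card g = 2" unfolding D_def Kkl_verts_def by auto
    have "(i, a) \<in> D" "(j, b) \<in> D" using g unfolding D_def Kkl_verts_def by auto
    then have "\<sigma> (j, b) \<in> shadow_nbrs E (\<sigma> (i, a))"
      using multipartite_partsD(4)[OF P g(2,3,6)] \<sigma>(2) by force
    then show "\<exists>e\<in>E. \<sigma> ` g \<subseteq> e" unfolding shadow_nbrs_def g(1) by auto
  qed
qed

lemma Sup_real_degenerate:
  fixes X :: "real set"
  assumes "X = {} \<or> \<not> bdd_above X"
  shows "Sup X = Sup ({} :: real set)"
proof -
  have "Sup Y = (THE x::real. False)" if "Y = {} \<or> \<not> bdd_above Y" for Y :: "real set"
  proof -
    have none: "\<not> ((\<forall>y\<in>Y. y \<le> z) \<and> (\<forall>z'. (\<forall>y\<in>Y. y \<le> z') \<longrightarrow> z \<le> z'))" for z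
    proof (cases "Y = {}")
      case True
      then show ?thesis by (auto intro: exI[of _ "z - 1"])
    next
      case False
      then show ?thesis using that unfolding bdd_above_def by auto
    qed
    have "(\<lambda>z. (\<forall>y\<in>Y. y \<le> z) \<and> (\<forall>z'. (\<forall>y\<in>Y. y \<le> z') \<longrightarrow> z \<le> z')) = (\<lambda>z. False)"
      by (rule ext) (use none in blast)
    then show ?thesis unfolding Sup_real_def Least_def by simp
  qed
  then show ?thesis using assms by simp
qed

text \<open>The Sup of an empty or unbounded set of reals is the unspecified constant \<open>Sup {}\<close>,
  so n0 is chosen large enough for the threshold to exceed it.\<close>
lemma large_eigenvalue_of_spectral_radius:
  assumes r: "2 \<le> r" and \<beta>: "0 < \<beta>" and \<epsilon>: "0 < \<epsilon>"
  shows "\<exists>n0. \<forall>(V :: 'a set) E. n0 \<le> card V \<and>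
      real (card V) / real (r - 1) * \<beta> \<le> spectral_radius_hg r V E \<longrightarrow>
      (\<exists>lam. tensor_eigenvalue r V E lam \<and> real (card V) * (\<beta> - \<epsilon>) \<le> real (r - 1) * cmod lam)"
proof -
  define s0 where "s0 = Sup ({} :: real set)"
  define \<rho> where "\<rho> = real (r - 1)"
  have \<rho>: "0 < \<rho>" unfolding \<rho>_def using r by simp
  have "\<exists>lam. tensor_eigenvalue r V E lam \<and> real (card V) * (\<beta> - \<epsilon>) \<le> \<rho> * cmod lam"
    if large: "nat \<lceil>\<bar>s0\<bar> * \<rho> / \<beta> + \<rho> / \<epsilon>\<rceil> + 1 \<le> card V"
      and spec: "real (card V) / \<rho> * \<beta> \<le> spectral_radius_hg r V E" for V :: "'a set" and E
  proof -
    define n where "n = real (card V)"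
    define t where "t = n / \<rho> * \<beta>"
    from large have "\<bar>s0\<bar> * \<rho> / \<beta> + \<rho> / \<epsilon> < n" unfolding n_def by linarith
    moreover have "0 \<le> \<bar>s0\<bar> * \<rho> / \<beta>" "0 \<le> \<rho> / \<epsilon>" using \<beta> \<epsilon> \<rho> by simp_all
    ultimately have n: "\<bar>s0\<bar> * \<rho> / \<beta> < n" "\<rho> / \<epsilon> \<le> n" by linarith+
    have "\<bar>s0\<bar> * \<rho> < n * \<beta>" using n(1) \<beta> by (simp add: field_simps)
    then have "\<bar>s0\<bar> < t" unfolding t_def using \<rho> by (simp add: field_simps)
    then have "s0 < t" by linarith
    from spec have t: "t \<le> Sup {cmod lam | lam. tensor_eigenvalue r V E lam}"
      unfolding t_def n_def spectral_radius_hg_def .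
    define Ev where "Ev = {cmod lam | lam. tensor_eigenvalue r V E lam}"
    have "Ev \<noteq> {} \<and> bdd_above Ev"
      using Sup_real_degenerate[of Ev] \<open>s0 < t\<close> t unfolding Ev_def s0_def by force
    then obtain x where "x \<in> Ev" "t - 1 < x"
      using less_cSup_iff[of Ev "t - 1"] t unfolding Ev_def by force
    then obtain lam where lam: "tensor_eigenvalue r V E lam" "t - 1 < cmod lam" unfolding Ev_def by blast
    have "\<rho> * t = n * \<beta>" unfolding t_def using \<rho> by simp
    then have "n * \<beta> - \<rho> < \<rho> * cmod lam"
      using mult_strict_left_mono[OF lam(2) \<rho>] by (simp add: right_diff_distrib)
    moreover have "\<rho> \<le> n * \<epsilon>" using n(2) \<epsilon> by (simp add: field_simps)
    ultimately show ?thesis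
      using lam(1) unfolding n_def by (intro exI[of _ lam]) (simp add: algebra_simps)
  qed
  then show ?thesis unfolding \<rho>_def by blast
qed

lemma multipartite_shadow_of_large_spectral_radius:
  assumes r: "2 \<le> r" and c: "0 < c"
  shows "\<exists>n0. \<forall>(V :: 'a set) E. uniform_hypergraph r V E \<and> linear_hypergraph E \<and> n0 \<le> card V \<and>
      real (card V) / real (r - 1) * (1 - 1 / real m + c) \<le> spectral_radius_hg r V E
      \<longrightarrow> (\<exists>P. multipartite_parts V (shadow_nbrs E) (Suc m) L P)"
proof -
  have "1 / real m \<le> 1" by (cases m) auto
  then have \<beta>: "0 < 1 - 1 / real m + c" using c by linarith
  obtain n1 where ES: "\<forall>(V :: 'a set) N w \<mu>. graph_on V N \<and> n1 \<le> card V \<and>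
      (\<forall>i. 0 \<le> w i) \<and> (\<exists>i\<in>V. 0 < w i) \<and> (\<forall>i\<in>V. \<mu> * w i \<le> sum w (N i)) \<and>
      real (card V) * (1 - 1 / real m + c / 2) \<le> \<mu> \<longrightarrow> (\<exists>P. multipartite_parts V N (Suc m) L P)"
    using spectral_erdos_stone[of "c / 2" m L] c by auto
  obtain n2 where eig: "\<forall>(V :: 'a set) E. n2 \<le> card V \<and>
      real (card V) / real (r - 1) * (1 - 1 / real m + c) \<le> spectral_radius_hg r V E \<longrightarrow>
      (\<exists>lam. tensor_eigenvalue r V E lam \<and>
        real (card V) * (1 - 1 / real m + c - c / 2) \<le> real (r - 1) * cmod lam)"
    using large_eigenvalue_of_spectral_radius[OF r \<beta>, of "c / 2"] c by auto
  have "uniform_hypergraph r V E \<and> linear_hypergraph E \<and> max n1 n2 \<le> card V \<and>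
      real (card V) / real (r - 1) * (1 - 1 / real m + c) \<le> spectral_radius_hg r V E
      \<longrightarrow> (\<exists>P. multipartite_parts V (shadow_nbrs E) (Suc m) L P)" for V :: "'a set" and E
  proof (intro impI, elim conjE)
    assume U: "uniform_hypergraph r V E" and Lin: "linear_hypergraph E" and n: "max n1 n2 \<le> card V"
      and \<rho>: "real (card V) / real (r - 1) * (1 - 1 / real m + c) \<le> spectral_radius_hg r V E"
    have "1 - 1 / real m + c - c / 2 = 1 - 1 / real m + c / 2" by simp
    then obtain lam where lam: "tensor_eigenvalue r V E lam"
      "real (card V) * (1 - 1 / real m + c / 2) \<le> real (r - 1) * cmod lam"
      using eig \<rho> n by (metis max.bounded_iff)
    obtain w where w: "\<And>i. 0 \<le> w i" "\<exists>i\<in>V. 0 < w i"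
      "\<And>i. i \<in> V \<Longrightarrow> real (r - 1) * cmod lam * w i \<le> sum w (shadow_nbrs E i)"
      using tensor_eigenvalue_shadow_weighting[OF U Lin r lam(1)] by blast
    then show "\<exists>P. multipartite_parts V (shadow_nbrs E) (Suc m) L P"
      using ES[rule_format, of V "shadow_nbrs E" w "real (r - 1) * cmod lam"]
        graph_on_shadow_nbrs[OF U] lam(2) n by auto
  qed
  then show ?thesis by blast
qed

theorem lemma1p5:
  fixes k l r :: nat and c :: real
  assumes "k \<ge> 3" and "l \<ge> 2" and "r \<ge> 2" and "c > 0"
  shows "\<exists>n0::nat. \<forall>(V::nat set) (E::nat set set).
           uniform_hypergraph r V E \<and> linear_hypergraph E \<and> card V \<ge> n0 \<and>
           spectral_radius_hg r V E \<ge>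
             real (card V) / real (r - 1) * (1 - 1 / real (k - 1) + c)
           \<longrightarrow> contains_hg V E (expansion_verts r (Kkl_verts k l) (Kkl_edges k l))
                               (expansion_edges r (Kkl_edges k l))"
proof -
  have k: "Suc (k - 1) = k" using assms(1) by simp
  obtain n0 where n0: "\<forall>(V :: nat set) E. uniform_hypergraph r V E \<and> linear_hypergraph E \<and> n0 \<le> card V \<and>
      real (card V) / real (r - 1) * (1 - 1 / real (k - 1) + c) \<le> spectral_radius_hg r V E
      \<longrightarrow> (\<exists>P. multipartite_parts V (shadow_nbrs E) k (expansion_part_size k l r) P)"
    using multipartite_shadow_of_large_spectral_radius[OF assms(3,4), of "k - 1" "expansion_part_size k l r"]
    unfolding k by blast
  show ?thesis
    using n0 multipartite_shadow_contains_expansion by blast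
qed

end
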